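(* Under Assumption 1, for every $\xi>0$ and every bounded set $S\subseteq\mathcal{Z}$ there exists $\alpha_\xi>0$ such that $G_\xi(z;z^\star)\ge\alpha_\xi\,\mathrm{dist}(z,\mathcal{Z}^\star)^2$ for all $z^\star\in\mathcal{Z}^\star$ and all $z\in S$. This holds both for the minimax problem (A) with $\mathcal{Z}=\mathbb{R}^{n\times m}_+\times\mathbb{R}^m$, and for the minimax problem (B) with $\mathcal{Z}=\mathbb{R}^{n\times m}_+\times\mathbb{R}^n_{>0}\times\mathbb{R}^m\times\mathbb{R}^n$.
   Context: Fisher market: $n$ buyers, $m$ goods, budgets $w_i>0$, utilities $u_{ij}\ge0$; Assumption 1: every row and column of $U=(u_{ij})$ has a positive entry. Problem (A): $\min_{x\ge0}\max_{p}\ \mathcal{L}(x,p)=-\sum_i w_i\log(\sum_j u_{ij}x_{ij})+\sum_j p_j(\sum_i x_{ij}-1)$, $z=(x,p)$. Problem (B): $\min_{x\ge0,t>0}\max_{p,y}\ \mathcal{L}(x,t;p,y)=-\sum_i w_i\log t_i+\sum_j p_j(\sum_i x_{ij}-1)+\sum_i y_i(t_i-\sum_j u_{ij}x_{ij})$, $z=((x,t),(p,y))$. For either problem, with primal part $\mathrm{pr}(z)$ and dual part $\mathrm{du}(z)$: $Q(z,\hat z)=\mathcal{L}(\mathrm{pr}(z),\mathrm{du}(\hat z))-\mathcal{L}(\mathrm{pr}(\hat z),\mathrm{du}(z))$; $G_\xi(z;\dot z)=\max_{\hat z\in\mathcal{Z}}\{Q(z,\hat z)-\frac\xi2\|\hat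 z-\dot z\|^2\}$; $\mathcal{Z}^\star$ is the set of saddle points. *)

theory Defs
  imports "HOL-Analysis.Analysis" "HOL-Library.Extended_Real"
begin

text \<open>Buyers are indexed by the finite type 'n, goods by the finite type 'm.
  Budgets w :: real^'n, utilities u :: real^'m^'n (u $ i $ j = u_ij),
  allocations x :: real^'m^'n (x $ i $ j = x_ij). All norms are Euclidean
  (the product / vector norms of HOL-Analysis).\<close>

definition util :: "real^'m^'n \<Rightarrow> real^'m^'n \<Rightarrow> 'n \<Rightarrow> real" where
  "util u x i = (\<Sum>j\<in>UNIV. u $ i $ j * x $ i $ j)"

definition LA :: "real^'n \<Rightarrow> real^'m^'n \<Rightarrow> real^'m^'n \<Rightarrow> real^'m \<Rightarrow> ereal" where
  "LA w u x p =
     (if (\<forall>i. util u x i > 0)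
      then ereal (- (\<Sum>i\<in>UNIV. w $ i * ln (util u x i))
                  + (\<Sum>j\<in>UNIV. p $ j * ((\<Sum>i\<in>UNIV. x $ i $ j) - 1)))
      else \<infinity>)"

definition ZA :: "((real^'m^'n) \<times> (real^'m)) set" where
  "ZA = {(x, p). \<forall>i j. x $ i $ j \<ge> 0}"

definition LB :: "real^'n \<Rightarrow> real^'m^'n \<Rightarrow> ((real^'m^'n) \<times> (real^'n)) \<Rightarrow> ((real^'m) \<times> (real^'n)) \<Rightarrow> ereal" where
  "LB w u xt py =
     ereal (- (\<Sum>i\<in>UNIV. w $ i * ln (snd xt $ i))
            + (\<Sum>j\<in>UNIV. fst py $ j * ((\<Sum>i\<in>UNIV. fst xt $ i $ j) - 1))
            + (\<Sum>i\<in>UNIV. snd py $ i * (snd xt $ i - util u (fst xt) i)))"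

definition ZB :: "(((real^'m^'n) \<times> (real^'n)) \<times> ((real^'m) \<times> (real^'n))) set" where
  "ZB = {((x, t), (p, y)). (\<forall>i j. x $ i $ j \<ge> 0) \<and> (\<forall>i. t $ i > 0)}"

definition Qgap :: "('a \<Rightarrow> 'b \<Rightarrow> ereal) \<Rightarrow> ('a \<times> 'b) \<Rightarrow> ('a \<times> 'b) \<Rightarrow> ereal" where
  "Qgap L z zh = L (fst z) (snd zh) - L (fst zh) (snd z)"

definition Gsm :: "('a::metric_space \<Rightarrow> 'b::metric_space \<Rightarrow> ereal) \<Rightarrow> ('a \<times> 'b) set \<Rightarrow> real
                    \<Rightarrow> ('a \<times> 'b) \<Rightarrow> ('a \<times> 'b) \<Rightarrow> ereal"
  where
  "Gsm L Z \<xi> z zd = (SUP zh\<in>Z. Qgap L z zh - ereal (\<xi> / 2 * (dist zh zd)\<^sup>2))"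

definition saddle_points :: "('a \<Rightarrow> 'b \<Rightarrow> ereal) \<Rightarrow> ('a \<times> 'b) set \<Rightarrow> ('a \<times> 'b) set" where
  "saddle_points L Z =
     {zs \<in> Z. \<forall>z\<in>Z. L (fst zs) (snd z) \<le> L (fst zs) (snd zs)
                   \<and> L (fst zs) (snd zs) \<le> L (fst z) (snd zs)}"

end

theory Submission
  imports Defs
begin

text \<open>Let \<open>z\<^sup>\<star>\<close> be a saddle point. The smoothed gap \<open>G\<^sub>\<xi>(z; z\<^sup>\<star>)\<close> is bounded below by
  the value of its objective at one explicit test point. Its dual part is a proximal step from the
  saddle prices (and, for (B), multipliers) towards the constraint violation of \<open>z\<close>, which gains
  the squared violation over \<open>2\<xi>\<close>. Its primal part moves the saddle point along one coordinate in
  the direction of the largest dual error: the allocation of a buyer holding a large share of the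
  worst priced good (together with \<open>t\<close> for (B)), or, for (B), one coordinate of \<open>t\<close>. The
  integrated first-order conditions of the saddle point and a second-order bound for the logarithm
  turn this into a gain proportional to the squared dual error. Strict concavity of the logarithm
  on a bounded set adds a gain in the squared error of the utilities (of \<open>t\<close> for (B)). Finally,
  every nonnegative allocation with the same demands and utilities as the saddle allocation is again
  a saddle point, so Hoffman's error bound for the polyhedron \<open>{x \<ge> 0. M x = M x\<^sup>\<star>}\<close> converts
  the three gains into the squared distance to the saddle set.\<close>

section \<open>Hoffman's error bound for the nonnegative orthant\<close>

definition coord_support :: "'a::euclidean_space \<Rightarrow> 'a set" where
  "coord_support x = {b\<in>Basis. x \<bullet> b \<noteq> 0}"

definition conformal_le :: "'a::euclidean_space \<Rightarrow> 'a \<Rightarrow> bool" where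
  "conformal_le e d \<longleftrightarrow>
     (\<forall>b\<in>Basis. 0 \<le> e \<bullet> b \<and> e \<bullet> b \<le> d \<bullet> b \<or> d \<bullet> b \<le> e \<bullet> b \<and> e \<bullet> b \<le> 0)"

definition same_signs :: "'a::euclidean_space \<Rightarrow> 'a \<Rightarrow> bool" where
  "same_signs e d \<longleftrightarrow> (\<forall>b\<in>Basis. (0 \<le> d \<bullet> b \<longrightarrow> 0 \<le> e \<bullet> b) \<and> (d \<bullet> b \<le> 0 \<longrightarrow> e \<bullet> b \<le> 0))"

lemma conformal_le_refl: "conformal_le d d"
  unfolding conformal_le_def by auto

lemma conformal_le_trans: "conformal_le e d \<Longrightarrow> conformal_le f e \<Longrightarrow> conformal_le f d"
  unfolding conformal_le_def by (meson order_trans)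

lemma coord_support_subset_Basis: "coord_support x \<subseteq> Basis"
  unfolding coord_support_def by auto

lemma subspace_coord_support: "subspace {v. coord_support v \<subseteq> J}"
  unfolding subspace_def coord_support_def by (auto simp: inner_add_left subset_iff)

lemma linear_bounded_below_on_supports:
  fixes M :: "'a::euclidean_space \<Rightarrow> 'b::euclidean_space"
  assumes "linear M"
  obtains e where "e > 0"
    "\<And>J v. J \<subseteq> Basis \<Longrightarrow> (\<And>v. coord_support v \<subseteq> J \<Longrightarrow> M v = 0 \<Longrightarrow> v = 0) \<Longrightarrow>
       coord_support v \<subseteq> J \<Longrightarrow> e * norm v \<le> norm (M v)"
proof -
  have "\<exists>e>0. (\<forall>v. coord_support v \<subseteq> J \<and> M v = 0 \<longrightarrow> v = 0) \<longrightarrow>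
          (\<forall>v. coord_support v \<subseteq> J \<longrightarrow> e * norm v \<le> norm (M v))" for J
  proof (cases "\<forall>v. coord_support v \<subseteq> J \<and> M v = 0 \<longrightarrow> v = 0")
    case True
    have "bounded_linear M"
      using assms linear_conv_bounded_linear by blast
    moreover have "\<forall>v\<in>{v. coord_support v \<subseteq> J}. M v = 0 \<longrightarrow> v = 0"
      using True by blast
    ultimately obtain e where "e > 0" "\<forall>v\<in>{v. coord_support v \<subseteq> J}. e * norm v \<le> norm (M v)"
      using injective_imp_isometric[OF closed_subspace[OF subspace_coord_support] subspace_coord_support]
      by blast
    then show ?thesis
      by auto
  qed (auto intro: exI[of _ 1])
  then obtain E where E: "\<And>J. E J > 0"
    "\<And>J v. (\<forall>v. coord_support v \<subseteq> J \<and> M v = 0 \<longrightarrow> v = 0) \<Longrightarrow> coord_support v \<subseteq> J \<Longrightarrow>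
       E J * norm v \<le> norm (M v)"
    by metis
  show thesis
  proof
    show "Min (E ` Pow Basis) > 0"
      using E(1) by (subst Min_gr_iff) auto
    fix J v
    assume "J \<subseteq> Basis" "\<And>v. coord_support v \<subseteq> J \<Longrightarrow> M v = 0 \<Longrightarrow> v = 0" "coord_support v \<subseteq> J"
    moreover have "Min (E ` Pow Basis) \<le> E J"
      using \<open>J \<subseteq> Basis\<close> by simp
    ultimately show "Min (E ` Pow Basis) * norm v \<le> norm (M v)"
      using E(2) by (meson mult_right_mono norm_ge_zero order_trans)
  qed
qed
lemma shrink_coordinate:
  fixes d k t :: real
  assumes t: "0 < t" and le: "0 < k * d \<Longrightarrow> t \<le> d / k" and zero: "d = 0 \<Longrightarrow> k = 0"
  shows "(0 \<le> d \<longrightarrow> 0 \<le> d - t * k) \<and> (d \<le> 0 \<longrightarrow> d - t * k \<le> 0) \<and>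
    (0 \<le> k * d \<longrightarrow> 0 \<le> d - t * k \<and> d - t * k \<le> d \<or> d \<le> d - t * k \<and> d - t * k \<le> 0)"
proof -
  consider "0 < k" "0 < d" | "k < 0" "d < 0" | "0 < k" "d < 0" | "k < 0" "0 < d" | "k = 0"
    using zero by (metis linorder_neqE_linordered_idom)
  then show ?thesis
  proof cases
    case 1
    moreover have "t * k \<le> d"
      using le 1 by (simp add: pos_le_divide_eq)
    ultimately show ?thesis
      using t by simp
  next
    case 2
    moreover have "d \<le> t * k"
      using le 2 by (simp add: neg_le_divide_eq mult_neg_neg)
    moreover have "t * k < 0"
      using t 2 by (simp add: mult_pos_neg)
    ultimately show ?thesis
      by (simp add: mult_neg_neg)
  next
    case 3
    moreover have "0 < t * k" "k * d < 0"
      using t 3 by (simp_all add: mult_pos_neg)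
    ultimately show ?thesis
      by simp
  next
    case 4
    moreover have "t * k < 0" "k * d < 0"
      using t 4 by (simp_all add: mult_pos_neg mult_neg_pos)
    ultimately show ?thesis
      by simp
  qed auto
qed

lemma support_reducing_shift:
  fixes d k :: "'a::euclidean_space"
  assumes supp: "coord_support k \<subseteq> coord_support d"
    and b0: "b0 \<in> Basis" "0 < k \<bullet> b0 * (d \<bullet> b0)"
  obtains t where "0 < t" "same_signs (d - t *\<^sub>R k) d"
    "coord_support (d - t *\<^sub>R k) \<subset> coord_support d"
    "\<forall>b\<in>Basis. 0 \<le> k \<bullet> b * (d \<bullet> b) \<Longrightarrow> conformal_le (d - t *\<^sub>R k) d"
proof -
  define T where "T = {b\<in>Basis. 0 < k \<bullet> b * (d \<bullet> b)}"
  define t where "t = Min ((\<lambda>b. d \<bullet> b / (k \<bullet> b)) ` T)"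
  have T: "finite T" "b0 \<in> T"
    using b0 by (auto simp: T_def)
  then obtain b1 where b1: "b1 \<in> T" "t = d \<bullet> b1 / (k \<bullet> b1)"
    unfolding t_def by (metis (no_types, lifting) Min_in empty_iff finite_imageI imageE image_is_empty)
  have t_le: "t \<le> d \<bullet> b / (k \<bullet> b)" if "b \<in> Basis" "0 < k \<bullet> b * (d \<bullet> b)" for b
    unfolding t_def using T that by (auto simp: T_def)
  have t_pos: "0 < t"
    using b1 by (auto simp: T_def zero_less_divide_iff zero_less_mult_iff)
  have zero: "k \<bullet> b = 0" if "b \<in> Basis" "d \<bullet> b = 0" for b
    using supp that by (auto simp: coord_support_def)
  have coord: "(0 \<le> d \<bullet> b \<longrightarrow> 0 \<le> d \<bullet> b - t * (k \<bullet> b)) \<and> (d \<bullet> b \<le> 0 \<longrightarrow> d \<bullet> b - t * (k \<bullet> b) \<le> 0) \<and>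
      (0 \<le> k \<bullet> b * (d \<bullet> b) \<longrightarrow> 0 \<le> d \<bullet> b - t * (k \<bullet> b) \<and> d \<bullet> b - t * (k \<bullet> b) \<le> d \<bullet> b \<or>
        d \<bullet> b \<le> d \<bullet> b - t * (k \<bullet> b) \<and> d \<bullet> b - t * (k \<bullet> b) \<le> 0)" if "b \<in> Basis" for b
    by (rule shrink_coordinate[OF t_pos t_le[OF that] zero[OF that]])
  show thesis
  proof
    show "same_signs (d - t *\<^sub>R k) d"
      using coord by (simp add: same_signs_def inner_diff_left)
    have "coord_support (d - t *\<^sub>R k) \<subseteq> coord_support d"
      using zero by (auto simp: coord_support_def inner_diff_left)
    moreover have "b1 \<in> coord_support d - coord_support (d - t *\<^sub>R k)"
      using b1 by (auto simp: T_def coord_support_def inner_diff_left)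
    ultimately show "coord_support (d - t *\<^sub>R k) \<subset> coord_support d"
      by blast
    show "conformal_le (d - t *\<^sub>R k) d" if "\<forall>b\<in>Basis. 0 \<le> k \<bullet> b * (d \<bullet> b)"
      using coord that by (simp add: conformal_le_def inner_diff_left)
  qed (rule t_pos)
qed

lemma conformal_le_convex_combination:
  fixes d e1 e2 :: "'a::euclidean_space"
  assumes "same_signs e1 d" "same_signs e2 d" "conformal_le e1' e1" "conformal_le e2' e2"
    and l: "0 \<le> l" "l \<le> 1" and d: "d = l *\<^sub>R e1 + (1 - l) *\<^sub>R e2"
  shows "conformal_le (l *\<^sub>R e1' + (1 - l) *\<^sub>R e2') d"
  unfolding conformal_le_def
proof
  fix b :: 'a
  assume b: "b \<in> Basis"
  have db: "d \<bullet> b = l * (e1 \<bullet> b) + (1 - l) * (e2 \<bullet> b)"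
    using d by (simp add: inner_add_left)
  have e1: "0 \<le> e1' \<bullet> b \<and> e1' \<bullet> b \<le> e1 \<bullet> b \<or> e1 \<bullet> b \<le> e1' \<bullet> b \<and> e1' \<bullet> b \<le> 0"
    and e2: "0 \<le> e2' \<bullet> b \<and> e2' \<bullet> b \<le> e2 \<bullet> b \<or> e2 \<bullet> b \<le> e2' \<bullet> b \<and> e2' \<bullet> b \<le> 0"
    using assms(3,4) b by (auto simp: conformal_le_def)
  show "0 \<le> (l *\<^sub>R e1' + (1 - l) *\<^sub>R e2') \<bullet> b \<and> (l *\<^sub>R e1' + (1 - l) *\<^sub>R e2') \<bullet> b \<le> d \<bullet> b \<or>
        d \<bullet> b \<le> (l *\<^sub>R e1' + (1 - l) *\<^sub>R e2') \<bullet> b \<and> (l *\<^sub>R e1' + (1 - l) *\<^sub>R e2') \<bullet> b \<le> 0"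
  proof (cases "0 \<le> d \<bullet> b")
    case True
    then have "0 \<le> e1' \<bullet> b \<and> e1' \<bullet> b \<le> e1 \<bullet> b" "0 \<le> e2' \<bullet> b \<and> e2' \<bullet> b \<le> e2 \<bullet> b"
      using assms(1,2) b e1 e2 by (auto simp: same_signs_def)
    then show ?thesis
      using l by (intro disjI1) (auto simp: db inner_add_left intro!: add_mono mult_left_mono)
  next
    case False
    then have "e1 \<bullet> b \<le> e1' \<bullet> b \<and> e1' \<bullet> b \<le> 0" "e2 \<bullet> b \<le> e2' \<bullet> b \<and> e2' \<bullet> b \<le> 0"
      using assms(1,2) b e1 e2 by (auto simp: same_signs_def)
    then show ?thesis
      using l by (intro disjI2) (auto simp: db inner_add_left mult_nonneg_nonpos
          intro!: add_mono mult_left_mono add_nonpos_nonpos)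
  qed
qed

lemma coord_support_uminus [simp]: "coord_support (- x) = coord_support x"
  by (simp add: coord_support_def)

lemma kernel_vector_aligned:
  fixes M :: "'a::euclidean_space \<Rightarrow> 'b::euclidean_space"
  assumes M: "linear M" and k: "coord_support k \<subseteq> coord_support d" "M k = 0" "k \<noteq> 0"
  obtains k' b where "coord_support k' \<subseteq> coord_support d" "M k' = 0" "b \<in> Basis" "0 < k' \<bullet> b * (d \<bullet> b)"
proof -
  obtain b where b: "b \<in> Basis" "k \<bullet> b \<noteq> 0"
    using k(3) euclidean_all_zero_iff by blast
  then have "d \<bullet> b \<noteq> 0"
    using k(1) by (auto simp: coord_support_def)
  show thesis
  proof (cases "0 < k \<bullet> b * (d \<bullet> b)")
    case True
    with k b show thesis
      by (intro that) auto
  next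
    case False
    with b \<open>d \<bullet> b \<noteq> 0\<close> have "0 < (- k) \<bullet> b * (d \<bullet> b)"
      by (auto simp: mult_less_0_iff zero_less_mult_iff)
    with k b M show thesis
      by (intro that[of "- k"]) (auto simp: linear_neg)
  qed
qed

lemma segment_through_shifts:
  fixes d k :: "'a::real_vector"
  assumes "0 < t1" "0 < t2"
  shows "d = (t2 / (t1 + t2)) *\<^sub>R (d - t1 *\<^sub>R k) + (1 - t2 / (t1 + t2)) *\<^sub>R (d + t2 *\<^sub>R k)"
proof -
  define l where "l = t2 / (t1 + t2)"
  have "l *\<^sub>R (d - t1 *\<^sub>R k) + (1 - l) *\<^sub>R (d + t2 *\<^sub>R k) = d + ((1 - l) * t2 - l * t1) *\<^sub>R k"
    by (simp add: algebra_simps)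
  also have "(1 - l) * t2 - l * t1 = 0"
    using assms by (simp add: l_def field_simps)
  finally show ?thesis
    by (simp add: l_def)
qed

lemma kernel_direction_split:
  fixes M :: "'a::euclidean_space \<Rightarrow> 'b::euclidean_space"
  assumes M: "linear M" and k: "coord_support k \<subseteq> coord_support d" "M k = 0" "k \<noteq> 0"
  obtains (one_sided) e where "coord_support e \<subset> coord_support d" "M e = M d" "conformal_le e d"
  | (two_sided) e1 e2 l where "coord_support e1 \<subset> coord_support d" "coord_support e2 \<subset> coord_support d"
      "M e1 = M d" "M e2 = M d" "same_signs e1 d" "same_signs e2 d"
      "0 \<le> l" "l \<le> 1" "d = l *\<^sub>R e1 + (1 - l) *\<^sub>R e2"
proof -
  obtain k' b where k': "coord_support k' \<subseteq> coord_support d" "M k' = 0" "b \<in> Basis" "0 < k' \<bullet> b * (d \<bullet> b)"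
    using kernel_vector_aligned[OF assms] by blast
  have M_shift: "M (d + s *\<^sub>R k') = M d" for s
    using M k'(2) by (simp add: linear_add linear_scale)
  obtain t1 where t1: "0 < t1" "same_signs (d - t1 *\<^sub>R k') d"
    "coord_support (d - t1 *\<^sub>R k') \<subset> coord_support d"
    "\<forall>b\<in>Basis. 0 \<le> k' \<bullet> b * (d \<bullet> b) \<Longrightarrow> conformal_le (d - t1 *\<^sub>R k') d"
    using support_reducing_shift[OF k'(1,3,4)] by blast
  have M1: "M (d - t1 *\<^sub>R k') = M d"
    using M_shift[of "- t1"] by simp
  show thesis
  proof (cases "\<forall>b\<in>Basis. 0 \<le> k' \<bullet> b * (d \<bullet> b)")
    case True
    with t1 M1 show thesis
      by (intro one_sided) auto
  next
    case False
    then obtain b' where b': "b' \<in> Basis" "0 < (- k') \<bullet> b' * (d \<bullet> b')"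
      by (auto simp: not_le)
    have supp': "coord_support (- k') \<subseteq> coord_support d"
      using k'(1) by simp
    obtain t2 where "0 < t2" "same_signs (d - t2 *\<^sub>R - k') d"
      "coord_support (d - t2 *\<^sub>R - k') \<subset> coord_support d"
      using support_reducing_shift[OF supp' b'] by metis
    then have t2: "0 < t2" "same_signs (d + t2 *\<^sub>R k') d"
      "coord_support (d + t2 *\<^sub>R k') \<subset> coord_support d"
      by simp_all
    define l where "l = t2 / (t1 + t2)"
    have l: "0 \<le> l" "l \<le> 1"
      using t1(1) t2(1) by (auto simp: l_def)
    have "d = l *\<^sub>R (d - t1 *\<^sub>R k') + (1 - l) *\<^sub>R (d + t2 *\<^sub>R k')"
      unfolding l_def using t1(1) t2(1) by (rule segment_through_shifts)
    with t1 t2 l M1 M_shift show thesis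
      by (intro two_sided) auto
  qed
qed

lemma conformal_preimage_of_kernel_direction:
  fixes M :: "'a::euclidean_space \<Rightarrow> 'b::euclidean_space"
  assumes M: "linear M" and k: "coord_support k \<subseteq> coord_support d" "M k = 0" "k \<noteq> 0"
    and smaller: "\<And>d1. coord_support d1 \<subset> coord_support d \<Longrightarrow> M d1 = M d \<Longrightarrow>
      \<exists>d'. conformal_le d' d1 \<and> M d' = M d \<and> norm d' \<le> B"
  shows "\<exists>d'. conformal_le d' d \<and> M d' = M d \<and> norm d' \<le> B"
  using M k
proof (cases rule: kernel_direction_split)
  case (one_sided e1)
  then show ?thesis
    using smaller conformal_le_trans by metis
next
  case (two_sided e1 e2 l)
  obtain e1' where e1': "conformal_le e1' e1" "M e1' = M d" "norm e1' \<le> B"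
    using smaller[OF two_sided(1,3)] by blast
  obtain e2' where e2': "conformal_le e2' e2" "M e2' = M d" "norm e2' \<le> B"
    using smaller[OF two_sided(2,4)] by blast
  have "convex (M -` {M d} \<inter> cball 0 B)"
    by (intro convex_Int convex_linear_vimage[OF M] convex_singleton convex_cball)
  then have "l *\<^sub>R e1' + (1 - l) *\<^sub>R e2' \<in> M -` {M d} \<inter> cball 0 B"
    using e1' e2' two_sided(7,8) by (intro convexD) auto
  moreover have "conformal_le (l *\<^sub>R e1' + (1 - l) *\<^sub>R e2') d"
    using two_sided e1'(1) e2'(1) by (intro conformal_le_convex_combination) auto
  ultimately show ?thesis
    by auto
qed

lemma conformal_preimage_bound:
  fixes M :: "'a::euclidean_space \<Rightarrow> 'b::euclidean_space"
  assumes M: "linear M"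
  obtains H where "0 \<le> H" "\<And>d. \<exists>d'. conformal_le d' d \<and> M d' = M d \<and> norm d' \<le> H * norm (M d)"
proof -
  obtain e where e: "e > 0" "\<And>J v. J \<subseteq> Basis \<Longrightarrow> (\<And>v. coord_support v \<subseteq> J \<Longrightarrow> M v = 0 \<Longrightarrow> v = 0) \<Longrightarrow>
       coord_support v \<subseteq> J \<Longrightarrow> e * norm v \<le> norm (M v)"
    using linear_bounded_below_on_supports[OF M] by blast
  have "\<exists>d'. conformal_le d' d \<and> M d' = M d \<and> norm d' \<le> norm (M d) / e" for d
  proof (induction "card (coord_support d)" arbitrary: d rule: less_induct)
    case less
    show ?case
    proof (cases "\<forall>v. coord_support v \<subseteq> coord_support d \<and> M v = 0 \<longrightarrow> v = 0")
      case True
      then have "e * norm d \<le> norm (M d)"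
        using e(2)[OF coord_support_subset_Basis] by blast
      then show ?thesis
        using e(1) conformal_le_refl by (auto simp: pos_le_divide_eq mult.commute)
    next
      case False
      then obtain k where k: "coord_support k \<subseteq> coord_support d" "M k = 0" "k \<noteq> 0"
        by blast
      show ?thesis
      proof (rule conformal_preimage_of_kernel_direction[OF M k])
        fix d1
        assume d1: "coord_support d1 \<subset> coord_support d" "M d1 = M d"
        then have "card (coord_support d1) < card (coord_support d)"
          by (meson psubset_card_mono finite_subset coord_support_subset_Basis finite_Basis)
        from less[OF this] d1(2) show "\<exists>d'. conformal_le d' d1 \<and> M d' = M d \<and> norm d' \<le> norm (M d) / e"
          by simp
      qed
    qed
  qed
  with e(1) show thesis
    by (intro that[of "1 / e"]) auto
qed

definition orthant_error_bound ::
  "('a::ordered_euclidean_space \<Rightarrow> 'b::real_normed_vector) \<Rightarrow> real \<Rightarrow> bool" where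
  "orthant_error_bound M H \<longleftrightarrow> 0 \<le> H \<and>
     (\<forall>x y. 0 \<le> x \<longrightarrow> 0 \<le> y \<longrightarrow> (\<exists>x'\<ge>0. M x' = M y \<and> norm (x - x') \<le> H * norm (M x - M y)))"

theorem hoffman_orthant_error_bound:
  fixes M :: "'a::ordered_euclidean_space \<Rightarrow> 'b::euclidean_space"
  assumes M: "linear M"
  shows "\<exists>H. orthant_error_bound M H"
proof -
  obtain H where H: "0 \<le> H" "\<And>d. \<exists>d'. conformal_le d' d \<and> M d' = M d \<and> norm d' \<le> H * norm (M d)"
    using conformal_preimage_bound[OF M] by blast
  have "\<exists>x'\<ge>0. M x' = M y \<and> norm (x - x') \<le> H * norm (M x - M y)" if "0 \<le> x" "0 \<le> y" for x y :: 'a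
  proof -
    obtain d where d: "conformal_le d (x - y)" "M d = M (x - y)" "norm d \<le> H * norm (M (x - y))"
      using H(2) by blast
    have "0 \<le> (x - d) \<bullet> b" if "b \<in> Basis" for b
      using d(1) \<open>0 \<le> x\<close> \<open>0 \<le> y\<close> that
      by (fastforce simp: conformal_le_def eucl_le[where 'a='a] inner_diff_left)
    then have "0 \<le> x - d"
      by (simp add: eucl_le[where 'a='a])
    moreover have "M (x - d) = M y"
      using M d(2) by (simp add: linear_diff)
    ultimately show ?thesis
      using d(3) M by (intro exI[of _ "x - d"]) (simp add: linear_diff)
  qed
  with H(1) show ?thesis
    unfolding orthant_error_bound_def by blast
qed

lemma ln_midpoint_gap:
  fixes a b :: real
  assumes "0 < a" "0 < b"
  shows "(a - b)\<^sup>2 / (a + b)\<^sup>2 \<le> 2 * ln ((a + b) / 2) - ln a - ln b"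
proof -
  define r where "r = (a + b) / 2"
  have r: "0 < r"
    using assms by (simp add: r_def)
  have "ln (a * b / r\<^sup>2) \<le> a * b / r\<^sup>2 - 1"
    using assms r by (intro ln_le_minus_one) simp
  moreover have "ln (a * b / r\<^sup>2) = ln a + ln b - 2 * ln r"
    using assms r by (simp add: ln_mult ln_div ln_realpow)
  moreover have "a * b / r\<^sup>2 - 1 = (4 * a * b - (a + b)\<^sup>2) / (a + b)\<^sup>2"
    using assms by (simp add: r_def field_simps)
  moreover have "4 * a * b - (a + b)\<^sup>2 = - (a - b)\<^sup>2"
    by (simp add: power2_eq_square algebra_simps)
  ultimately show ?thesis
    by (simp add: r_def)
qed

lemma ln_second_difference:
  fixes U v :: real
  assumes "0 < U" "\<bar>v\<bar> \<le> U / 2"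
  shows "- 2 * (v / U)\<^sup>2 \<le> ln (U + v) + ln (U - v) - 2 * ln U"
proof -
  define s where "s = (v / U)\<^sup>2"
  have "\<bar>v / U\<bar> \<le> 1 / 2"
    using assms by (simp add: abs_div field_simps)
  then have "\<bar>v / U\<bar>\<^sup>2 \<le> (1 / 2)\<^sup>2"
    by (rule power_mono) simp
  then have s: "0 \<le> s" "s \<le> 1 / 4"
    unfolding s_def by (auto simp: power_divide)
  have "ln (1 / (1 - s)) \<le> 1 / (1 - s) - 1"
    using s by (intro ln_le_minus_one) simp
  then have "- (s / (1 - s)) \<le> ln (1 - s)"
    using s by (simp add: ln_div field_simps)
  moreover have "s / (1 - s) \<le> 2 * s"
  proof -
    have "s * (s * 2) \<le> s * 1"
      using s by (intro mult_left_mono) auto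
    then show ?thesis
      using s by (simp add: field_simps)
  qed
  moreover have "ln (U + v) + ln (U - v) - 2 * ln U = ln (1 - s)"
  proof -
    have "0 < U + v" "0 < U - v"
      using assms by auto
    then have "ln (U + v) + ln (U - v) - 2 * ln U = ln ((U + v) * (U - v) / U\<^sup>2)"
      using assms by (simp add: ln_mult ln_div ln_realpow)
    also have "(U + v) * (U - v) / U\<^sup>2 = 1 - s"
      using assms by (simp add: s_def field_simps power2_eq_square)
    finally show ?thesis .
  qed
  ultimately show ?thesis
    by (simp add: s_def)
qed

lemma reflected_log_gain:
  fixes U v w c :: real
  assumes "0 < U" "\<bar>v\<bar> \<le> U / 2" "0 \<le> w" and c: "c \<le> w * ln U - w * ln (U - v)"
  shows "c - 2 * w * (v / U)\<^sup>2 \<le> w * ln (U + v) - w * ln U"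
proof -
  have "w * (- 2 * (v / U)\<^sup>2) \<le> w * (ln (U + v) + ln (U - v) - 2 * ln U)"
    using ln_second_difference[OF assms(1,2)] assms(3) by (rule mult_left_mono)
  with c show ?thesis
    by (simp add: algebra_simps)
qed

lemma ln_diff_le:
  fixes U a :: real
  assumes "0 < U" "0 \<le> a" "a \<le> U / 2"
  shows "ln U - ln (U - a) \<le> 2 * a / U"
proof -
  have "0 < U - a"
    using assms by simp
  have "ln (U / (U - a)) \<le> U / (U - a) - 1"
    using assms \<open>0 < U - a\<close> by (intro ln_le_minus_one) simp
  also have "U / (U - a) - 1 = a / (U - a)"
    using \<open>0 < U - a\<close> by (simp add: field_simps)
  also have "a / (U - a) \<le> 2 * a / U"
  proof -
    have "a * (a * 2) \<le> a * U"
      using assms by (intro mult_left_mono) auto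
    then show ?thesis
      using assms \<open>0 < U - a\<close> by (simp add: field_simps)
  qed
  finally show ?thesis
    using assms \<open>0 < U - a\<close> by (simp add: ln_div)
qed

lemma quadratic_step_gain:
  fixes \<eta> C d :: real
  assumes "0 \<le> \<eta>" "\<eta> * C \<le> 1 / 2"
  shows "\<eta> * d\<^sup>2 / 2 \<le> \<eta> * d\<^sup>2 - C * (\<eta> * d)\<^sup>2"
proof -
  have "C * (\<eta> * d)\<^sup>2 = (\<eta> * d\<^sup>2) * (\<eta> * C)"
    by (simp add: power2_eq_square)
  also have "\<dots> \<le> (\<eta> * d\<^sup>2) * (1 / 2)"
    using assms by (intro mult_left_mono) auto
  finally show ?thesis
    by simp
qed

lemma ex_max_coordinate:
  fixes f :: "'a::finite \<Rightarrow> real"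
  obtains k where "\<And>j. f j \<le> f k"
proof -
  have "Max (range f) \<in> range f"
    by (rule Max_in) auto
  then obtain k where "f k = Max (range f)"
    by (metis imageE)
  then show thesis
    by (intro that[of k]) simp
qed

lemma norm_axis: "norm (axis i x) = norm (x::'a::real_inner)"
  by (simp add: norm_eq_sqrt_inner inner_axis_axis)

lemma norm_power2_vec: "(norm (v::real^'k))\<^sup>2 = (\<Sum>j\<in>UNIV. (v $ j)\<^sup>2)"
  by (simp only: power2_norm_eq_inner inner_vec_def inner_real_def) (simp add: power2_eq_square)

lemma norm_le_card_mult:
  fixes v :: "real^'k"
  assumes "\<And>j. \<bar>v $ j\<bar> \<le> D"
  shows "(norm v)\<^sup>2 \<le> real CARD('k) * D\<^sup>2"
proof -
  have "(norm v)\<^sup>2 = (\<Sum>j\<in>UNIV. (v $ j)\<^sup>2)"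
    by (rule norm_power2_vec)
  also have "\<dots> \<le> (\<Sum>j\<in>(UNIV::'k set). D\<^sup>2)"
    using assms by (intro sum_mono) (metis abs_ge_zero power2_abs power_mono)
  finally show ?thesis
    by simp
qed

lemma norm_diff_power2_le:
  fixes a b c :: "'a::real_normed_vector"
  shows "(norm (a - c))\<^sup>2 \<le> 2 * (norm (a - b))\<^sup>2 + 2 * (norm (b - c))\<^sup>2"
proof -
  have "norm (a - c) \<le> norm (a - b) + norm (b - c)"
    by (rule norm_diff_triangle_le[of a b]) simp_all
  then have "(norm (a - c))\<^sup>2 \<le> (norm (a - b) + norm (b - c))\<^sup>2"
    by (simp add: power_mono)
  also have "\<dots> \<le> 2 * (norm (a - b))\<^sup>2 + 2 * (norm (b - c))\<^sup>2"
    using zero_le_power2[of "norm (a - b) - norm (b - c)"]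
    by (simp add: power2_eq_square algebra_simps)
  finally show ?thesis .
qed

lemma abs_nth_nth_le_norm: "\<bar>x $ i $ j\<bar> \<le> norm (x::real^'m^'n)"
  using component_le_norm_cart[of "x $ i" j] Finite_Cartesian_Product.norm_nth_le[of x i] by linarith

lemma norm_Pair_power2: "(norm (a, b))\<^sup>2 = (norm a)\<^sup>2 + (norm b)\<^sup>2"
  by (simp add: norm_Pair)

section \<open>Saddle points and the smoothed gap\<close>

definition error_rate :: "real \<Rightarrow> real \<Rightarrow> real \<Rightarrow> real \<Rightarrow> real \<Rightarrow> real" where
  "error_rate c \<xi> \<eta> M C = min c (min (1 / (2 * \<xi>)) (\<eta> / (2 * M))) / (C + 1)"

lemma error_rate_pos:
  "0 < c \<Longrightarrow> 0 < \<xi> \<Longrightarrow> 0 < \<eta> \<Longrightarrow> 0 < M \<Longrightarrow> 0 \<le> C \<Longrightarrow> 0 < error_rate c \<xi> \<eta> M C"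
  by (simp add: error_rate_def)

lemma saddle_pointsD:
  assumes "zs \<in> saddle_points L Z" "z \<in> Z"
  shows "L (fst zs) (snd z) \<le> L (fst zs) (snd zs)" "L (fst zs) (snd zs) \<le> L (fst z) (snd zs)"
  using assms by (auto simp: saddle_points_def)

lemma saddle_points_same_primal_values:
  assumes "zs \<in> saddle_points L Z" "(x, snd zs) \<in> Z" "L x = L (fst zs)"
  shows "(x, snd zs) \<in> saddle_points L Z"
  using assms by (simp add: saddle_points_def)

lemma Qgap_le_Gsm:
  "zh \<in> Z \<Longrightarrow> Qgap L z zh - ereal (\<xi> / 2 * (dist zh zd)\<^sup>2) \<le> Gsm L Z \<xi> z zd"
  unfolding Gsm_def by (rule SUP_upper)

lemma error_rate_mult_le:
  assumes \<delta>: "\<delta>\<^sup>2 \<le> C * (V + P) + M * d\<^sup>2" and \<Phi>: "c * P + V / (2 * \<xi>) + \<eta> * d\<^sup>2 / 2 \<le> \<Phi>"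
    and pos: "0 < c" "0 < \<xi>" "0 < \<eta>" "0 < M" "0 \<le> C" "0 \<le> V" "0 \<le> P"
  shows "error_rate c \<xi> \<eta> M C * \<delta>\<^sup>2 \<le> \<Phi>"
proof -
  define \<kappa> where "\<kappa> = min c (min (1 / (2 * \<xi>)) (\<eta> / (2 * M)))"
  define E where "E = P + V + M * d\<^sup>2"
  have "0 < \<kappa>"
    using pos by (simp add: \<kappa>_def)
  have "\<delta>\<^sup>2 \<le> (C + 1) * E"
  proof -
    have "0 \<le> C * (M * d\<^sup>2)"
      using pos by simp
    moreover have "(C + 1) * E = C * (V + P) + M * d\<^sup>2 + (P + V + C * (M * d\<^sup>2))"
      by (simp add: E_def algebra_simps)
    ultimately show ?thesis
      using \<delta> pos by linarith
  qed
  then have "\<kappa> / (C + 1) * \<delta>\<^sup>2 \<le> \<kappa> / (C + 1) * ((C + 1) * E)"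
    using \<open>0 < \<kappa>\<close> pos(5) by (intro mult_left_mono) auto
  also have "\<dots> = \<kappa> * E"
    using pos(5) by simp
  finally have "error_rate c \<xi> \<eta> M C * \<delta>\<^sup>2 \<le> \<kappa> * E"
    by (simp add: error_rate_def \<kappa>_def)
  also have "\<kappa> * E \<le> c * P + V / (2 * \<xi>) + \<eta> * d\<^sup>2 / 2"
  proof -
    have "\<kappa> * P \<le> c * P" "\<kappa> * V \<le> 1 / (2 * \<xi>) * V"
      "\<kappa> * (M * d\<^sup>2) \<le> \<eta> / (2 * M) * (M * d\<^sup>2)"
      using pos by (intro mult_right_mono; simp add: \<kappa>_def)+
    moreover have "\<eta> / (2 * M) * (M * d\<^sup>2) = \<eta> * d\<^sup>2 / 2"
      using pos by simp
    ultimately show ?thesis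
      by (simp add: E_def algebra_simps)
  qed
  finally show ?thesis
    using \<Phi> by linarith
qed

lemma Gsm_ge_error_rate:
  fixes L :: "'a::metric_space \<Rightarrow> 'b::metric_space \<Rightarrow> ereal"
  assumes zh: "zh \<in> Z" and gap: "Qgap L z zh - ereal (\<xi> / 2 * (dist zh zd)\<^sup>2) = ereal \<Phi>"
    and zs: "zs \<in> saddle_points L Z" and dist: "(dist z zs)\<^sup>2 \<le> C * (V + P) + M * d\<^sup>2"
    and \<Phi>: "c * P + V / (2 * \<xi>) + \<eta> * d\<^sup>2 / 2 \<le> \<Phi>"
    and pos: "0 < c" "0 < \<xi>" "0 < \<eta>" "0 < M" "0 \<le> C" "0 \<le> V" "0 \<le> P"
  shows "ereal (error_rate c \<xi> \<eta> M C * (infdist z (saddle_points L Z))\<^sup>2) \<le> Gsm L Z \<xi> z zd"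
proof -
  have "(infdist z (saddle_points L Z))\<^sup>2 \<le> (dist z zs)\<^sup>2"
    using zs by (intro power_mono infdist_le infdist_nonneg)
  with dist have "error_rate c \<xi> \<eta> M C * (infdist z (saddle_points L Z))\<^sup>2 \<le> \<Phi>"
    by (intro error_rate_mult_le[OF _ \<Phi> pos]) simp
  then have "ereal (error_rate c \<xi> \<eta> M C * (infdist z (saddle_points L Z))\<^sup>2) \<le> ereal \<Phi>"
    by simp
  also have "\<dots> \<le> Gsm L Z \<xi> z zd"
    unfolding gap[symmetric] using zh by (rule Qgap_le_Gsm)
  finally show ?thesis .
qed

section \<open>Fisher markets\<close>

definition allocated :: "real^'m^'n \<Rightarrow> real^'m" where
  "allocated x = (\<chi> j. \<Sum>i\<in>UNIV. x $ i $ j)"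

definition utils :: "real^'m^'n \<Rightarrow> real^'m^'n \<Rightarrow> real^'n" where
  "utils u x = (\<chi> i. util u x i)"

definition eisenberg_gale :: "real^'n \<Rightarrow> real^'n \<Rightarrow> real" where
  "eisenberg_gale w v = - (\<Sum>i\<in>UNIV. w $ i * ln (v $ i))"

definition lagrangian_A :: "real^'n \<Rightarrow> real^'m^'n \<Rightarrow> real^'m^'n \<Rightarrow> real^'m \<Rightarrow> real" where
  "lagrangian_A w u x p = eisenberg_gale w (utils u x) + p \<bullet> (allocated x - 1)"

definition lagrangian_B ::
  "real^'n \<Rightarrow> real^'m^'n \<Rightarrow> real^'m^'n \<Rightarrow> real^'n \<Rightarrow> real^'m \<Rightarrow> real^'n \<Rightarrow> real" where
  "lagrangian_B w u x t p y = eisenberg_gale w t + p \<bullet> (allocated x - 1) + y \<bullet> (t - utils u x)"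

lemma allocated_nth [simp]: "allocated x $ j = (\<Sum>i\<in>UNIV. x $ i $ j)"
  by (simp add: allocated_def)

lemma utils_nth [simp]: "utils u x $ i = util u x i"
  by (simp add: utils_def)

lemma linear_allocated: "linear allocated"
  by (rule linearI) (simp_all add: vec_eq_iff sum.distrib sum_distrib_left)

lemma linear_utils: "linear (utils u)"
  by (rule linearI)
    (simp_all add: vec_eq_iff util_def sum.distrib sum_distrib_left distrib_left mult.left_commute)

lemma LA_eq: "(\<And>i. 0 < util u x i) \<Longrightarrow> LA w u x p = ereal (lagrangian_A w u x p)"
  by (simp add: LA_def lagrangian_A_def eisenberg_gale_def inner_vec_def)

lemma LA_eq_infinity: "\<not> (\<forall>i. 0 < util u x i) \<Longrightarrow> LA w u x p = \<infinity>"
  by (simp add: LA_def)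

lemma LB_eq: "LB w u (x, t) (p, y) = ereal (lagrangian_B w u x t p y)"
  by (simp add: LB_def lagrangian_B_def eisenberg_gale_def inner_vec_def)

lemma ZA_iff [simp]: "(x, p) \<in> ZA \<longleftrightarrow> 0 \<le> x"
  by (simp add: ZA_def less_eq_vec_def)

lemma ZB_iff [simp]: "((x, t), (p, y)) \<in> ZB \<longleftrightarrow> 0 \<le> x \<and> (\<forall>i. 0 < t $ i)"
  by (simp add: ZB_def less_eq_vec_def)

lemma axis_axis_nth: "axis i (axis j c) $ a $ b = (if a = i \<and> b = j then c else 0)"
  by (simp add: axis_def)

lemma util_add_axis:
  "util u (x + s *\<^sub>R axis i (axis j 1)) k = util u x k + (if k = i then s * u $ i $ j else 0)"
proof -
  have "util u (x + s *\<^sub>R axis i (axis j 1)) k =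
      (\<Sum>b\<in>UNIV. u $ k $ b * x $ k $ b + (if k = i \<and> b = j then s * u $ i $ j else 0))"
    unfolding util_def by (intro sum.cong) (auto simp: axis_axis_nth distrib_left)
  then show ?thesis
    by (cases "k = i") (simp_all add: util_def sum.distrib)
qed

lemma utils_add_axis:
  "utils u (x + s *\<^sub>R axis i (axis j 1)) = utils u x + (s * u $ i $ j) *\<^sub>R axis i 1"
proof -
  have "(utils u x + (s * u $ i $ j) *\<^sub>R axis i 1) $ k = util u x k + (if k = i then s * u $ i $ j else 0)" for k
    by (simp add: axis_def)
  then show ?thesis
    by (simp add: vec_eq_iff util_add_axis)
qed

lemma allocated_add_axis: "allocated (x + s *\<^sub>R axis i (axis j 1)) = allocated x + s *\<^sub>R axis j 1"
proof -
  have "allocated (x + s *\<^sub>R axis i (axis j 1)) $ b = allocated x $ b + (if b = j then s else 0)" for b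
    by (cases "b = j") (simp_all add: axis_axis_nth sum.distrib flip: sum_distrib_left)
  then show ?thesis
    by (simp add: vec_eq_iff axis_def)
qed

lemma eisenberg_gale_add_axis:
  "eisenberg_gale w (v + s *\<^sub>R axis i 1) = eisenberg_gale w v - w $ i * ln (v $ i + s) + w $ i * ln (v $ i)"
proof -
  have "(\<Sum>k\<in>UNIV. w $ k * ln ((v + s *\<^sub>R axis i 1) $ k)) =
      (\<Sum>k\<in>UNIV. w $ k * ln (v $ k) + (if k = i then w $ i * ln (v $ i + s) - w $ i * ln (v $ i) else 0))"
    by (intro sum.cong) (auto simp: axis_def)
  then show ?thesis
    by (simp add: eisenberg_gale_def sum.distrib)
qed

lemma norm_scaleR_axis_axis: "norm (s *\<^sub>R axis i (axis j 1) :: real^'m^'n) = \<bar>s\<bar>"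
  by (simp add: norm_axis)

lemma share_ge_inverse_card:
  fixes x :: "real^'m^'n"
  assumes "allocated x $ j = 1"
  obtains i where "1 / real CARD('n) \<le> x $ i $ j"
proof (rule ccontr)
  assume "\<not> thesis"
  with that have "\<And>i. x $ i $ j < 1 / real CARD('n)"
    by (meson not_le)
  then have "(\<Sum>i\<in>UNIV. x $ i $ j) < (\<Sum>i\<in>(UNIV::'n set). 1 / real CARD('n))"
    by (intro sum_strict_mono) auto
  with assms show False
    by simp
qed

lemma eisenberg_gale_midpoint_gap:
  fixes a b w :: "real^'n"
  assumes pos: "\<And>i. 0 < a $ i" "\<And>i. 0 < b $ i" and K: "\<And>i. a $ i + b $ i \<le> K"
    and c: "0 \<le> c" "\<And>i. c \<le> w $ i"
  shows "c / K\<^sup>2 * (norm (a - b))\<^sup>2 \<le>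
    eisenberg_gale w a + eisenberg_gale w b - 2 * eisenberg_gale w ((1 / 2) *\<^sub>R (a + b))"
proof -
  have "c / K\<^sup>2 * (a $ i - b $ i)\<^sup>2 \<le>
      w $ i * (2 * ln ((a $ i + b $ i) / 2) - ln (a $ i) - ln (b $ i))" for i
  proof -
    have ab: "0 < a $ i + b $ i"
      using pos by (simp add: add_pos_pos)
    then have "0 < K"
      using K[of i] by linarith
    have "(a $ i + b $ i)\<^sup>2 \<le> K\<^sup>2"
      using ab K by (intro power_mono) auto
    then have "(a $ i - b $ i)\<^sup>2 / K\<^sup>2 \<le> (a $ i - b $ i)\<^sup>2 / (a $ i + b $ i)\<^sup>2"
      using ab \<open>0 < K\<close> by (intro divide_left_mono) auto
    moreover have "0 \<le> w $ i"
      using c(1) c(2)[of i] by linarith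
    ultimately have "c * ((a $ i - b $ i)\<^sup>2 / K\<^sup>2) \<le> w $ i * ((a $ i - b $ i)\<^sup>2 / (a $ i + b $ i)\<^sup>2)"
      using c by (intro mult_mono) auto
    also have "\<dots> \<le> w $ i * (2 * ln ((a $ i + b $ i) / 2) - ln (a $ i) - ln (b $ i))"
      using c(1) c(2)[of i] by (intro mult_left_mono ln_midpoint_gap pos) auto
    finally show ?thesis
      by simp
  qed
  then have "(\<Sum>i\<in>UNIV. c / K\<^sup>2 * (a $ i - b $ i)\<^sup>2) \<le>
      (\<Sum>i\<in>UNIV. w $ i * (2 * ln ((a $ i + b $ i) / 2) - ln (a $ i) - ln (b $ i)))"
    by (rule sum_mono)
  then show ?thesis
    by (simp add: eisenberg_gale_def norm_power2_vec sum_distrib_left algebra_simps sum_subtractf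
        sum.distrib add_divide_distrib)
qed

definition market_map :: "real^'m^'n \<Rightarrow> real^'m^'n \<Rightarrow> (real^'m) \<times> (real^'n)" where
  "market_map u x = (allocated x, utils u x)"

lemma linear_market_map: "linear (market_map u)"
  using linear_allocated linear_utils
  by (auto simp: market_map_def linear_iff)

lemma LA_cong:
  "allocated x = allocated x' \<Longrightarrow> utils u x = utils u x' \<Longrightarrow> LA w u x = LA w u x'"
  by (simp add: LA_def fun_eq_iff vec_eq_iff)

lemma LB_cong:
  "allocated x = allocated x' \<Longrightarrow> utils u x = utils u x' \<Longrightarrow> LB w u (x, t) = LB w u (x', t)"
  by (simp add: LB_def fun_eq_iff vec_eq_iff)

lemma le_one_if_allocated_eq_one:
  assumes "0 \<le> x" "allocated x = 1"
  shows "x $ i $ j \<le> 1"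
proof -
  have "x $ i $ j \<le> (\<Sum>a\<in>UNIV. x $ a $ j)"
    using assms(1) by (intro member_le_sum) (auto simp: less_eq_vec_def)
  also have "\<dots> = 1"
    using assms(2) by (simp add: vec_eq_iff)
  finally show ?thesis .
qed

lemma lagrangian_A_add_axis:
  "lagrangian_A w u (x + s *\<^sub>R axis i (axis j 1)) p =
    lagrangian_A w u x p - w $ i * ln (util u x i + s * u $ i $ j) + w $ i * ln (util u x i) + s * p $ j"
  by (simp add: lagrangian_A_def utils_add_axis allocated_add_axis eisenberg_gale_add_axis
      inner_axis algebra_simps)

lemma lagrangian_B_add_axis:
  "lagrangian_B w u (x + \<sigma> *\<^sub>R axis i (axis j 1)) (t + s *\<^sub>R axis i 1) p y =
    lagrangian_B w u x t p y - w $ i * ln (t $ i + s) + w $ i * ln (t $ i)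
      + s * y $ i + \<sigma> * p $ j - \<sigma> * u $ i $ j * y $ i"
  by (simp add: lagrangian_B_def utils_add_axis allocated_add_axis eisenberg_gale_add_axis
      inner_diff_right inner_axis algebra_simps)

locale fisher_market =
  fixes w :: "real^'n" and u :: "real^'m^'n"
  assumes w_pos: "\<And>i. 0 < w $ i"
    and u_nonneg: "\<And>i j. 0 \<le> u $ i $ j"
    and row_pos: "\<And>i. \<exists>j. 0 < u $ i $ j"
begin

definition wsum :: real where "wsum = (\<Sum>i\<in>UNIV. w $ i)"

definition wmin :: real where "wmin = Min (range (\<lambda>i. w $ i))"

definition usum :: real where "usum = (\<Sum>i\<in>UNIV. \<Sum>j\<in>UNIV. u $ i $ j)"

lemma w_le_wsum: "w $ i \<le> wsum"
  unfolding wsum_def using w_pos by (intro member_le_sum) (auto intro: less_imp_le)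

lemma wsum_pos: "0 < wsum"
  using w_le_wsum[of undefined] w_pos[of undefined] by linarith

lemma wmin_le: "wmin \<le> w $ i"
  by (simp add: wmin_def)

lemma wmin_pos: "0 < wmin"
  using w_pos by (simp add: wmin_def)

lemma u_le_usum: "u $ i $ j \<le> usum"
proof -
  have "u $ i $ j \<le> (\<Sum>b\<in>UNIV. u $ i $ b)"
    using u_nonneg by (intro member_le_sum) auto
  also have "\<dots> \<le> usum"
    unfolding usum_def using u_nonneg by (intro member_le_sum) (auto intro: sum_nonneg)
  finally show ?thesis .
qed

lemma usum_pos: "0 < usum"
  using row_pos[of undefined] u_le_usum by (meson less_le_trans)

lemma util_nonneg: "0 \<le> x \<Longrightarrow> 0 \<le> util u x i"
  unfolding util_def using u_nonneg by (intro sum_nonneg) (simp add: less_eq_vec_def)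

lemma util_ge_entry: "0 \<le> x \<Longrightarrow> u $ i $ j * x $ i $ j \<le> util u x i"
  unfolding util_def using u_nonneg
  by (intro member_le_sum[of j UNIV "\<lambda>b. u $ i $ b * x $ i $ b"]) (auto simp: less_eq_vec_def)

lemma util_le_usum: "(\<And>i j. x $ i $ j \<le> R) \<Longrightarrow> 0 \<le> R \<Longrightarrow> util u x i \<le> usum * R"
proof -
  assume "\<And>i j. x $ i $ j \<le> R" "0 \<le> R"
  then have "util u x i \<le> (\<Sum>b\<in>UNIV. u $ i $ b * R)"
    unfolding util_def using u_nonneg by (intro sum_mono mult_left_mono) auto
  also have "\<dots> = (\<Sum>b\<in>UNIV. u $ i $ b) * R"
    by (simp add: sum_distrib_right)
  also have "\<dots> \<le> usum * R"
    unfolding usum_def using u_nonneg \<open>0 \<le> R\<close>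
    by (intro mult_right_mono member_le_sum) (auto intro: sum_nonneg)
  finally show ?thesis .
qed

lemma entry_le_card_mult_util:
  assumes "0 \<le> x" "1 / real CARD('n) \<le> x $ i $ j"
  shows "u $ i $ j \<le> real CARD('n) * util u x i"
proof -
  have "u $ i $ j = real CARD('n) * (u $ i $ j * (1 / real CARD('n)))"
    by simp
  also have "\<dots> \<le> real CARD('n) * (u $ i $ j * x $ i $ j)"
    using assms u_nonneg by (intro mult_left_mono) auto
  also have "\<dots> \<le> real CARD('n) * util u x i"
    using assms by (intro mult_left_mono util_ge_entry) auto
  finally show ?thesis .
qed

lemma large_share_shift:
  assumes x: "0 \<le> x" and share: "1 / real CARD('n) \<le> x $ i $ j"
    and \<tau>: "\<bar>\<tau>\<bar> \<le> 1 / (2 * real CARD('n))"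
  shows "0 \<le> x + \<tau> *\<^sub>R axis i (axis j 1)" and "\<bar>\<tau> * u $ i $ j\<bar> \<le> util u x i / 2"
    and "(\<tau> * u $ i $ j / util u x i)\<^sup>2 \<le> (real CARD('n) * \<tau>)\<^sup>2"
proof -
  have half: "\<bar>\<tau>\<bar> \<le> x $ i $ j / 2"
    using share \<tau> by simp
  then show "0 \<le> x + \<tau> *\<^sub>R axis i (axis j 1)"
    using x by (auto simp: less_eq_vec_def axis_axis_nth)
  have "\<bar>\<tau> * u $ i $ j\<bar> = \<bar>\<tau>\<bar> * u $ i $ j"
    using u_nonneg by (simp add: abs_mult)
  also have "\<dots> \<le> x $ i $ j / 2 * u $ i $ j"
    using half u_nonneg by (rule mult_right_mono)
  also have "\<dots> \<le> util u x i / 2"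
    using util_ge_entry[OF x, of i j] by (simp add: mult.commute)
  finally show "\<bar>\<tau> * u $ i $ j\<bar> \<le> util u x i / 2" .
  have "\<bar>\<tau> * u $ i $ j / util u x i\<bar> \<le> \<bar>real CARD('n) * \<tau>\<bar>"
  proof (cases "util u x i = 0")
    case False
    then have "0 < util u x i"
      using util_nonneg[OF x, of i] by simp
    then show ?thesis
      using entry_le_card_mult_util[OF x share] u_nonneg[of i j]
      by (simp add: abs_mult abs_div divide_le_eq mult_left_mono mult.commute mult.left_commute)
  qed simp
  then show "(\<tau> * u $ i $ j / util u x i)\<^sup>2 \<le> (real CARD('n) * \<tau>)\<^sup>2"
    by (metis abs_ge_zero power2_abs power_mono)
qed

end

section \<open>Problem (A)\<close>

context fisher_market
begin

definition step_A :: "real \<Rightarrow> real \<Rightarrow> real" where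
  "step_A R \<xi> =
     1 / (2 * real CARD('n) * (R + 2 * real CARD('n) * wsum) + 4 * wsum * (real CARD('n))\<^sup>2 + \<xi>)"

lemma step_A:
  assumes "0 \<le> R" "0 < \<xi>"
  shows "0 < step_A R \<xi>" "step_A R \<xi> * (2 * real CARD('n) * (R + 2 * real CARD('n) * wsum)) \<le> 1"
    "step_A R \<xi> * (4 * wsum * (real CARD('n))\<^sup>2 + \<xi>) \<le> 1"
proof -
  define a1 where "a1 = 2 * real CARD('n) * (R + 2 * real CARD('n) * wsum)"
  define a2 where "a2 = 4 * wsum * (real CARD('n))\<^sup>2 + \<xi>"
  have a: "0 \<le> a1" "0 < a2"
    using assms wsum_pos by (simp_all add: a1_def a2_def add_nonneg_pos)
  have \<eta>: "step_A R \<xi> = 1 / (a1 + a2)"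
    by (simp add: step_A_def a1_def a2_def)
  show "0 < step_A R \<xi>" "step_A R \<xi> * a1 \<le> 1" "step_A R \<xi> * a2 \<le> 1"
    using a unfolding \<eta> by (simp_all add: field_simps)
qed

end

locale saddle_A = fisher_market w u for w :: "real^'n" and u :: "real^'m^'n" +
  fixes xs :: "real^'m^'n" and ps :: "real^'m"
  assumes saddle: "(xs, ps) \<in> saddle_points (LA w u) ZA"
begin

lemma xs_nonneg: "0 \<le> xs"
  using saddle by (simp add: saddle_points_def)

lemma LA_xs_le: "0 \<le> x \<Longrightarrow> LA w u xs ps \<le> LA w u x ps"
  using saddle_pointsD(2)[OF saddle, of "(x, ps)"] by simp

lemma LA_le_xs: "LA w u xs q \<le> LA w u xs ps"
  using saddle_pointsD(1)[OF saddle, of "(xs, q)"] xs_nonneg by simp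

lemma util_xs_pos: "0 < util u xs i"
proof -
  have "0 < util u 1 k" for k
    using row_pos[of k] u_nonneg by (auto simp: util_def intro: sum_pos2)
  then have "LA w u xs ps \<le> ereal (lagrangian_A w u 1 ps)"
    using LA_xs_le[of 1] by (simp add: LA_eq less_eq_vec_def)
  then have "LA w u xs ps \<noteq> \<infinity>"
    by auto
  then show ?thesis
    using LA_eq_infinity by blast
qed

lemma allocated_xs: "allocated xs = 1"
proof -
  define c where "c = allocated xs - 1"
  have "lagrangian_A w u xs (ps + c) = lagrangian_A w u xs ps + (norm c)\<^sup>2"
    by (simp add: lagrangian_A_def c_def inner_add_left power2_norm_eq_inner)
  moreover have "lagrangian_A w u xs (ps + c) \<le> lagrangian_A w u xs ps"
    using LA_le_xs[of "ps + c"] by (simp add: LA_eq util_xs_pos)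
  ultimately show ?thesis
    by (simp add: c_def)
qed

lemma lagrangian_A_xs: "lagrangian_A w u xs q = eisenberg_gale w (utils u xs)"
  by (simp add: lagrangian_A_def allocated_xs)

lemma LA_xs: "LA w u xs q = ereal (eisenberg_gale w (utils u xs))"
  by (simp add: LA_eq util_xs_pos lagrangian_A_xs)

lemma eisenberg_gale_xs_le:
  "0 \<le> x \<Longrightarrow> (\<And>i. 0 < util u x i) \<Longrightarrow> eisenberg_gale w (utils u xs) \<le> lagrangian_A w u x ps"
  using LA_xs_le[of x] by (simp add: LA_xs LA_eq)

lemma saddle_of_same_image:
  assumes "0 \<le> x" "allocated x = allocated xs" "utils u x = utils u xs"
  shows "(x, ps) \<in> saddle_points (LA w u) ZA"
  using saddle_points_same_primal_values[OF saddle, of x] assms LA_cong[OF assms(2,3), of w] by simp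

lemma shift_feasible:
  assumes share: "1 / real CARD('n) \<le> xs $ i $ j" and \<tau>: "\<bar>\<tau>\<bar> \<le> 1 / (2 * real CARD('n))"
  shows "0 \<le> xs + \<tau> *\<^sub>R axis i (axis j 1)" and "0 < util u (xs + \<tau> *\<^sub>R axis i (axis j 1)) k"
  using large_share_shift[OF xs_nonneg share \<tau>] util_xs_pos[of k] by (auto simp: util_add_axis)

text \<open>Integrated form of the optimality condition \<open>w\<^sub>i u\<^sub>i\<^sub>j / U\<^sub>i \<le> p\<^sub>j\<close> of the saddle
  allocation, tested along the direction of the entry \<open>(i, j)\<close>.\<close>

lemma log_gain_le_price:
  assumes "1 / real CARD('n) \<le> xs $ i $ j" "\<bar>\<tau>\<bar> \<le> 1 / (2 * real CARD('n))"
  shows "w $ i * ln (util u xs i + \<tau> * u $ i $ j) - w $ i * ln (util u xs i) \<le> \<tau> * ps $ j"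
  using eisenberg_gale_xs_le[OF shift_feasible[OF assms]]
  by (simp add: lagrangian_A_add_axis lagrangian_A_xs)

lemma price_bounds:
  assumes share: "1 / real CARD('n) \<le> xs $ i $ j"
  shows "0 \<le> ps $ j" "ps $ j \<le> 2 * real CARD('n) * w $ i"
proof -
  define s where "s = 1 / (2 * real CARD('n))"
  define U where "U = util u xs i"
  define a where "a = u $ i $ j"
  have s: "0 < s" "\<bar>s\<bar> \<le> 1 / (2 * real CARD('n))" "\<bar>- s\<bar> \<le> 1 / (2 * real CARD('n))"
    by (simp_all add: s_def)
  have U: "0 < U" and a: "0 \<le> a"
    using util_xs_pos u_nonneg by (simp_all add: U_def a_def)
  have "U \<le> U + s * a"
    using a s by simp
  then have "ln U \<le> ln (U + s * a)"
    using U by simp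
  then have "w $ i * ln U \<le> w $ i * ln (U + s * a)"
    using w_pos[of i] by (simp add: mult_left_mono)
  with log_gain_le_price[OF share s(2)] have "0 \<le> s * ps $ j"
    by (simp add: U_def a_def)
  with s(1) show "0 \<le> ps $ j"
    by (simp add: zero_le_mult_iff)
  have small: "\<bar>s * a\<bar> \<le> U / 2"
    using large_share_shift(2)[OF xs_nonneg share s(2)] by (simp add: U_def a_def)
  have "s * ps $ j \<le> w $ i * (ln U - ln (U - s * a))"
    using log_gain_le_price[OF share s(3)] by (simp add: U_def a_def algebra_simps)
  also have "\<dots> \<le> w $ i * (2 * (s * a) / U)"
    using U a s small w_pos[of i] by (intro mult_left_mono ln_diff_le) auto
  also have "\<dots> = s * (2 * w $ i * (a / U))"
    by simp
  finally have "ps $ j \<le> 2 * w $ i * (a / U)"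
    using s(1) by (rule mult_left_le_imp_le)
  also have "\<dots> \<le> 2 * w $ i * real CARD('n)"
    using entry_le_card_mult_util[OF xs_nonneg share] U w_pos[of i]
    by (intro mult_left_mono) (simp_all add: U_def a_def pos_divide_le_eq mult.commute less_imp_le)
  finally show "ps $ j \<le> 2 * real CARD('n) * w $ i"
    by (simp add: mult_ac)
qed

lemma abs_price_le: "\<bar>ps $ j\<bar> \<le> 2 * real CARD('n) * wsum"
proof -
  obtain i where share: "1 / real CARD('n) \<le> xs $ i $ j"
    using share_ge_inverse_card[of xs j] allocated_xs by auto
  have "2 * real CARD('n) * w $ i \<le> 2 * real CARD('n) * wsum"
    using w_le_wsum by simp
  with price_bounds[OF share] show ?thesis
    by linarith
qed

lemma dual_gain_A:
  assumes share: "1 / real CARD('n) \<le> xs $ i $ j" and \<tau>: "\<bar>\<tau>\<bar> \<le> 1 / (2 * real CARD('n))"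
  shows "- (p $ j - ps $ j) * \<tau> - 2 * w $ i * (real CARD('n) * \<tau>)\<^sup>2 \<le>
    eisenberg_gale w (utils u xs) - lagrangian_A w u (xs + \<tau> *\<^sub>R axis i (axis j 1)) p"
proof -
  define U where "U = util u xs i"
  define a where "a = u $ i $ j"
  have U: "0 < U" and a: "0 \<le> a"
    using util_xs_pos u_nonneg by (simp_all add: U_def a_def)
  have "\<tau> * ps $ j \<le> w $ i * ln U - w $ i * ln (U - \<tau> * a)"
    using log_gain_le_price[OF share, of "- \<tau>"] \<tau> by (simp add: U_def a_def)
  then have gain: "\<tau> * ps $ j - 2 * w $ i * (\<tau> * a / U)\<^sup>2 \<le> w $ i * ln (U + \<tau> * a) - w $ i * ln U"
    using U w_pos[of i] large_share_shift(2)[OF xs_nonneg share \<tau>]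
    by (intro reflected_log_gain) (auto simp: U_def a_def less_imp_le)
  have "(\<tau> * a / U)\<^sup>2 \<le> (real CARD('n) * \<tau>)\<^sup>2"
    using large_share_shift(3)[OF xs_nonneg share \<tau>] by (simp add: U_def a_def)
  then have "2 * w $ i * (\<tau> * a / U)\<^sup>2 \<le> 2 * w $ i * (real CARD('n) * \<tau>)\<^sup>2"
    using w_pos[of i] by simp
  with gain show ?thesis
    by (simp add: lagrangian_A_add_axis lagrangian_A_xs U_def a_def algebra_simps)
qed

lemma dual_step_A:
  assumes p: "\<And>j. \<bar>p $ j\<bar> \<le> R" and \<xi>: "0 < \<xi>"
  obtains xh d where "0 \<le> xh" "\<And>i. 0 < util u xh i"
    "step_A R \<xi> * d\<^sup>2 / 2 \<le>
       eisenberg_gale w (utils u xs) - lagrangian_A w u xh p - \<xi> / 2 * (norm (xh - xs))\<^sup>2"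
    "(norm (p - ps))\<^sup>2 \<le> real CARD('m) * d\<^sup>2"
proof -
  let ?N = "real CARD('n)" and ?\<eta> = "step_A R \<xi>"
  obtain jm where jm: "\<And>j. \<bar>p $ j - ps $ j\<bar> \<le> \<bar>p $ jm - ps $ jm\<bar>"
    using ex_max_coordinate[of "\<lambda>j. \<bar>p $ j - ps $ j\<bar>"] by blast
  obtain im where share: "1 / ?N \<le> xs $ im $ jm"
    using share_ge_inverse_card[of xs jm] allocated_xs by auto
  define d where "d = p $ jm - ps $ jm"
  define \<tau> where "\<tau> = - ?\<eta> * d"
  have R: "0 \<le> R"
    using p[of undefined] by linarith
  have d: "\<bar>d\<bar> \<le> R + 2 * ?N * wsum"
    using p[of jm] abs_price_le[of jm] by (simp add: d_def)
  note \<eta> = step_A[OF R \<xi>]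
  have "\<bar>\<tau>\<bar> \<le> ?\<eta> * (R + 2 * ?N * wsum)"
    using \<eta>(1) d by (simp add: \<tau>_def abs_mult)
  also have "\<dots> \<le> 1 / (2 * ?N)"
    using \<eta>(2) by (simp add: field_simps)
  finally have \<tau>: "\<bar>\<tau>\<bar> \<le> 1 / (2 * ?N)" .
  define xh where "xh = xs + \<tau> *\<^sub>R axis im (axis jm 1)"
  have "?\<eta> * (2 * w $ im * ?N\<^sup>2 + \<xi> / 2) \<le> ?\<eta> * (4 * wsum * ?N\<^sup>2 + \<xi>) / 2"
    using \<eta>(1) w_le_wsum[of im] by (simp add: field_simps mult_left_mono)
  with \<eta>(3) have "?\<eta> * (2 * w $ im * ?N\<^sup>2 + \<xi> / 2) \<le> 1 / 2"
    by linarith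
  then have "?\<eta> * d\<^sup>2 / 2 \<le> ?\<eta> * d\<^sup>2 - (2 * w $ im * ?N\<^sup>2 + \<xi> / 2) * (?\<eta> * d)\<^sup>2"
    by (rule quadratic_step_gain[OF less_imp_le[OF \<eta>(1)]])
  also have "\<dots> = - d * \<tau> - 2 * w $ im * (?N * \<tau>)\<^sup>2 - \<xi> / 2 * (norm (xh - xs))\<^sup>2"
    by (simp add: xh_def \<tau>_def norm_scaleR_axis_axis power2_eq_square algebra_simps)
  also have "\<dots> \<le> eisenberg_gale w (utils u xs) - lagrangian_A w u xh p - \<xi> / 2 * (norm (xh - xs))\<^sup>2"
    using dual_gain_A[OF share \<tau>, of p] by (simp add: xh_def d_def)
  finally have gain: "?\<eta> * d\<^sup>2 / 2 \<le> \<dots>" .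
  have "(norm (p - ps))\<^sup>2 \<le> real CARD('m) * \<bar>d\<bar>\<^sup>2"
    using jm by (intro norm_le_card_mult) (simp add: d_def)
  then show thesis
    using that shift_feasible[OF share \<tau>] gain by (simp add: xh_def)
qed

lemma primal_gain_A:
  assumes x: "0 \<le> x" "\<And>i. 0 < util u x i" and R: "0 \<le> R" "\<And>i j. x $ i $ j \<le> R"
  shows "wmin / (usum * (R + 1))\<^sup>2 * (norm (utils u x - utils u xs))\<^sup>2 \<le>
    lagrangian_A w u x ps - eisenberg_gale w (utils u xs)"
proof -
  define m where "m = (1 / 2) *\<^sub>R (x + xs)"
  have um: "utils u m = (1 / 2) *\<^sub>R (utils u x + utils u xs)"
    by (simp add: m_def linear_add[OF linear_utils] linear_scale[OF linear_utils])
  have am: "allocated m - 1 = (1 / 2) *\<^sub>R (allocated x - 1)"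
    using allocated_xs
    by (simp add: m_def linear_add[OF linear_allocated] linear_scale[OF linear_allocated] vec_eq_iff)
  have "0 \<le> m"
    using x(1) xs_nonneg by (simp add: m_def less_eq_vec_def)
  moreover have "0 < util u m i" for i
  proof -
    have "util u m i = (util u x i + util u xs i) / 2"
      using um by (simp add: vec_eq_iff)
    then show ?thesis
      using x(2)[of i] util_xs_pos[of i] by simp
  qed
  ultimately have "eisenberg_gale w (utils u xs) \<le> lagrangian_A w u m ps"
    by (rule eisenberg_gale_xs_le)
  then have mid: "2 * eisenberg_gale w (utils u xs) \<le>
      2 * eisenberg_gale w ((1 / 2) *\<^sub>R (utils u x + utils u xs)) + ps \<bullet> (allocated x - 1)"
    by (simp add: lagrangian_A_def um am)
  have "util u x i + util u xs i \<le> usum * (R + 1)" for i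
    using util_le_usum[OF R(2) R(1), of i] util_le_usum[of xs 1 i]
      le_one_if_allocated_eq_one[OF xs_nonneg allocated_xs] by (simp add: algebra_simps)
  then have "wmin / (usum * (R + 1))\<^sup>2 * (norm (utils u x - utils u xs))\<^sup>2 \<le>
      eisenberg_gale w (utils u x) + eisenberg_gale w (utils u xs) -
      2 * eisenberg_gale w ((1 / 2) *\<^sub>R (utils u x + utils u xs))"
    using x(2) util_xs_pos wmin_pos wmin_le by (intro eisenberg_gale_midpoint_gap) (auto intro: less_imp_le)
  with mid show ?thesis
    by (simp add: lagrangian_A_def)
qed

lemma Gsm_A_infinite:
  assumes "\<not> (\<forall>i. 0 < util u x i)"
  shows "Gsm (LA w u) ZA \<xi> (x, p) (xs, ps) = \<infinity>"
proof -
  have "Qgap (LA w u) (x, p) (xs, ps) - ereal (\<xi> / 2 * (dist (xs, ps) (xs, ps))\<^sup>2) = \<infinity>"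
    using assms by (simp add: Qgap_def LA_eq_infinity LA_xs)
  moreover have "(xs, ps) \<in> ZA"
    using xs_nonneg by simp
  ultimately have "\<infinity> \<le> Gsm (LA w u) ZA \<xi> (x, p) (xs, ps)"
    using Qgap_le_Gsm by metis
  then show ?thesis
    by simp
qed

text \<open>The test point combines a proximal price step towards the excess demand \<open>allocated x - 1\<close>
  with the allocation shift of \<open>dual_step_A\<close>.\<close>

lemma test_point_A:
  assumes x: "0 \<le> x" "\<And>i. 0 < util u x i" and \<xi>: "0 < \<xi>"
    and R: "0 \<le> R" "\<And>i j. x $ i $ j \<le> R" "\<And>j. \<bar>p $ j\<bar> \<le> R"
  obtains zh \<Phi> d where "zh \<in> ZA"
    "Qgap (LA w u) (x, p) zh - ereal (\<xi> / 2 * (dist zh (xs, ps))\<^sup>2) = ereal \<Phi>"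
    "wmin / (usum * (R + 1))\<^sup>2 * (norm (utils u x - utils u xs))\<^sup>2 + (norm (allocated x - 1))\<^sup>2 / (2 * \<xi>)
       + step_A R \<xi> * d\<^sup>2 / 2 \<le> \<Phi>"
    "(norm (p - ps))\<^sup>2 \<le> real CARD('m) * d\<^sup>2"
proof -
  obtain xh d where xh: "0 \<le> xh" "\<And>i. 0 < util u xh i"
    and dual: "step_A R \<xi> * d\<^sup>2 / 2 \<le>
      eisenberg_gale w (utils u xs) - lagrangian_A w u xh p - \<xi> / 2 * (norm (xh - xs))\<^sup>2"
    and d: "(norm (p - ps))\<^sup>2 \<le> real CARD('m) * d\<^sup>2"
    using dual_step_A[OF R(3) \<xi>] by blast
  define v where "v = allocated x - 1"
  define ph where "ph = ps + (1 / \<xi>) *\<^sub>R v"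
  define \<Phi> where "\<Phi> = lagrangian_A w u x ph - lagrangian_A w u xh p -
    \<xi> / 2 * (norm (xh - xs))\<^sup>2 - \<xi> / 2 * (norm (ph - ps))\<^sup>2"
  have "Qgap (LA w u) (x, p) (xh, ph) - ereal (\<xi> / 2 * (dist (xh, ph) (xs, ps))\<^sup>2) = ereal \<Phi>"
    using x(2) xh(2) by (simp add: Qgap_def LA_eq \<Phi>_def dist_norm norm_Pair_power2 distrib_left)
  moreover have "(xh, ph) \<in> ZA"
    using xh(1) by simp
  moreover have "wmin / (usum * (R + 1))\<^sup>2 * (norm (utils u x - utils u xs))\<^sup>2 + (norm v)\<^sup>2 / (2 * \<xi>)
       + step_A R \<xi> * d\<^sup>2 / 2 \<le> \<Phi>"
  proof -
    have "lagrangian_A w u x ph = lagrangian_A w u x ps + (norm v)\<^sup>2 / \<xi>"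
      by (simp add: lagrangian_A_def ph_def v_def inner_add_left power2_norm_eq_inner)
    moreover have "\<xi> / 2 * (norm (ph - ps))\<^sup>2 = (norm v)\<^sup>2 / (2 * \<xi>)"
      using \<xi> by (simp add: ph_def power2_eq_square)
    moreover have "(norm v)\<^sup>2 / \<xi> - (norm v)\<^sup>2 / (2 * \<xi>) = (norm v)\<^sup>2 / (2 * \<xi>)"
      by simp
    ultimately show ?thesis
      using dual primal_gain_A[OF x R(1,2)] unfolding \<Phi>_def by linarith
  qed
  ultimately show thesis
    using that[of "(xh, ph)" \<Phi> d] d unfolding v_def by blast
qed

lemma saddle_near_A:
  assumes H: "orthant_error_bound (market_map u) H" and x: "0 \<le> x"
  obtains zs' where "zs' \<in> saddle_points (LA w u) ZA"
    "(dist (x, p) zs')\<^sup>2 \<le> H\<^sup>2 * ((norm (allocated x - 1))\<^sup>2 + (norm (utils u x - utils u xs))\<^sup>2)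
       + (norm (p - ps))\<^sup>2"
proof -
  obtain x' where x': "0 \<le> x'" "market_map u x' = market_map u xs"
    "norm (x - x') \<le> H * norm (market_map u x - market_map u xs)"
    using H x xs_nonneg unfolding orthant_error_bound_def by blast
  have "(norm (x - x'))\<^sup>2 \<le> (H * norm (market_map u x - market_map u xs))\<^sup>2"
    using x'(3) by (simp add: power_mono)
  also have "\<dots> = H\<^sup>2 * ((norm (allocated x - 1))\<^sup>2 + (norm (utils u x - utils u xs))\<^sup>2)"
    by (simp add: market_map_def norm_Pair allocated_xs power_mult_distrib)
  finally show thesis
    using that[of "(x', ps)"] x' saddle_of_same_image[of x']
    by (simp add: market_map_def dist_norm norm_Pair_power2)
qed

lemma Gsm_A_ge:
  assumes H: "orthant_error_bound (market_map u) H" and \<xi>: "0 < \<xi>" and R: "0 \<le> R"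
    and z: "z \<in> ZA" "norm z \<le> R"
  shows "ereal (error_rate (wmin / (usum * (R + 1))\<^sup>2) \<xi> (step_A R \<xi>) (real CARD('m)) (H\<^sup>2) *
      (infdist z (saddle_points (LA w u) ZA))\<^sup>2) \<le> Gsm (LA w u) ZA \<xi> z (xs, ps)"
proof -
  obtain x p where z_eq: "z = (x, p)"
    by fastforce
  have x: "0 \<le> x"
    using z(1) by (simp add: z_eq)
  show ?thesis
  proof (cases "\<forall>i. 0 < util u x i")
    case False
    then show ?thesis
      by (simp add: z_eq Gsm_A_infinite)
  next
    case True
    have "norm x \<le> R" "norm p \<le> R"
      using z(2) norm_fst_le[of x p] norm_snd_le[of p x] by (simp_all add: z_eq)
    then have xb: "x $ i $ j \<le> R" and pb: "\<bar>p $ j\<bar> \<le> R" for i j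
      using abs_nth_nth_le_norm[of x i j] component_le_norm_cart[of p j] by linarith+
    obtain zh \<Phi> d where zh: "zh \<in> ZA"
      and gap: "Qgap (LA w u) (x, p) zh - ereal (\<xi> / 2 * (dist zh (xs, ps))\<^sup>2) = ereal \<Phi>"
      and \<Phi>: "wmin / (usum * (R + 1))\<^sup>2 * (norm (utils u x - utils u xs))\<^sup>2
         + (norm (allocated x - 1))\<^sup>2 / (2 * \<xi>) + step_A R \<xi> * d\<^sup>2 / 2 \<le> \<Phi>"
      and d: "(norm (p - ps))\<^sup>2 \<le> real CARD('m) * d\<^sup>2"
      by (rule test_point_A[OF x True[rule_format] \<xi> R xb pb])
    obtain zs' where zs': "zs' \<in> saddle_points (LA w u) ZA"
      and near: "(dist (x, p) zs')\<^sup>2 \<le> H\<^sup>2 * ((norm (allocated x - 1))\<^sup>2 + (norm (utils u x - utils u xs))\<^sup>2)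
         + (norm (p - ps))\<^sup>2"
      by (rule saddle_near_A[OF H x])
    have "(dist (x, p) zs')\<^sup>2 \<le> H\<^sup>2 * ((norm (allocated x - 1))\<^sup>2 + (norm (utils u x - utils u xs))\<^sup>2)
         + real CARD('m) * d\<^sup>2"
      using near d by linarith
    from Gsm_ge_error_rate[OF zh gap zs' this \<Phi>] show ?thesis
      unfolding z_eq using \<xi> wmin_pos usum_pos step_A(1)[OF R \<xi>] R by simp
  qed
qed

end

context fisher_market
begin

lemma error_bound_A:
  assumes \<xi>: "0 < \<xi>" and S: "S \<subseteq> ZA" "bounded S"
  shows "\<exists>\<alpha>>0. \<forall>zs\<in>saddle_points (LA w u) ZA. \<forall>z\<in>S.
    ereal (\<alpha> * (infdist z (saddle_points (LA w u) ZA))\<^sup>2) \<le> Gsm (LA w u) ZA \<xi> z zs"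
proof -
  obtain R where R: "0 < R" "\<And>z. z \<in> S \<Longrightarrow> norm z \<le> R"
    using S(2) bounded_pos by blast
  obtain H where H: "orthant_error_bound (market_map u) H"
    using hoffman_orthant_error_bound[OF linear_market_map] by blast
  define \<alpha> where "\<alpha> = error_rate (wmin / (usum * (R + 1))\<^sup>2) \<xi> (step_A R \<xi>) (real CARD('m)) (H\<^sup>2)"
  have "0 < \<alpha>"
    unfolding \<alpha>_def using \<xi> R wmin_pos usum_pos step_A(1)[of R \<xi>] by (intro error_rate_pos) auto
  moreover have "ereal (\<alpha> * (infdist z (saddle_points (LA w u) ZA))\<^sup>2) \<le> Gsm (LA w u) ZA \<xi> z zs"
    if zs: "zs \<in> saddle_points (LA w u) ZA" and z: "z \<in> S" for zs z
  proof -
    obtain xs ps where zs_eq: "zs = (xs, ps)"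
      by fastforce
    interpret saddle_A w u xs ps
      using fisher_market_axioms zs by (simp add: saddle_A_def saddle_A_axioms_def zs_eq)
    have "z \<in> ZA" "norm z \<le> R"
      using z S(1) R(2) by auto
    then show ?thesis
      unfolding \<alpha>_def zs_eq by (rule Gsm_A_ge[OF H \<xi> less_imp_le[OF R(1)]])
  qed
  ultimately show ?thesis
    by blast
qed

end

section \<open>Problem (B)\<close>

context fisher_market
begin

definition umin :: real where "umin = Min {u $ i $ j | i j. 0 < u $ i $ j}"

lemma umin_le: "0 < u $ i $ j \<Longrightarrow> umin \<le> u $ i $ j"
proof -
  have "finite {u $ i $ j | i j. 0 < u $ i $ j}"
    by (rule finite_subset[of _ "(\<lambda>(i, j). u $ i $ j) ` UNIV"]) auto
  then show "0 < u $ i $ j \<Longrightarrow> umin \<le> u $ i $ j"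
    unfolding umin_def by (intro Min_le) auto
qed

lemma umin_pos: "0 < umin"
proof -
  obtain j where "0 < u $ undefined $ j"
    using row_pos by blast
  have "finite {u $ i $ j | i j. 0 < u $ i $ j}"
    by (rule finite_subset[of _ "(\<lambda>(i, j). u $ i $ j) ` UNIV"]) auto
  moreover have "{u $ i $ j | i j. 0 < u $ i $ j} \<noteq> {}"
    using \<open>0 < u $ undefined $ j\<close> by blast
  ultimately have "umin \<in> {u $ i $ j | i j. 0 < u $ i $ j}"
    unfolding umin_def by (rule Min_in)
  then show ?thesis
    by auto
qed

definition ys_bound :: real where "ys_bound = 2 * real CARD('n) * wsum / umin"

definition ts_lower :: real where "ts_lower = wmin / (2 * ys_bound)"

lemma ys_bound_pos: "0 < ys_bound" and ts_lower_pos: "0 < ts_lower"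
  using wsum_pos umin_pos wmin_pos by (simp_all add: ys_bound_def ts_lower_def)

definition step_B :: "real \<Rightarrow> real \<Rightarrow> real" where
  "step_B R \<xi> = 1 / (2 * real CARD('n) * (R + 2 * real CARD('n) * wsum)
     + (4 * wsum * (real CARD('n))\<^sup>2 + \<xi> * (1 + usum\<^sup>2)) + 2 * (R + ys_bound) / ts_lower
     + (4 * wsum / ts_lower\<^sup>2 + \<xi>))"

lemma step_B:
  assumes "0 \<le> R" "0 < \<xi>"
  shows "0 < step_B R \<xi>" "step_B R \<xi> * (2 * real CARD('n) * (R + 2 * real CARD('n) * wsum)) \<le> 1"
    "step_B R \<xi> * (4 * wsum * (real CARD('n))\<^sup>2 + \<xi> * (1 + usum\<^sup>2)) \<le> 1"
    "step_B R \<xi> * (2 * (R + ys_bound)) \<le> ts_lower" "step_B R \<xi> * (4 * wsum / ts_lower\<^sup>2 + \<xi>) \<le> 1"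
proof -
  define a1 where "a1 = 2 * real CARD('n) * (R + 2 * real CARD('n) * wsum)"
  define a2 where "a2 = 4 * wsum * (real CARD('n))\<^sup>2 + \<xi> * (1 + usum\<^sup>2)"
  define a3 where "a3 = 2 * (R + ys_bound) / ts_lower"
  define a4 where "a4 = 4 * wsum / ts_lower\<^sup>2 + \<xi>"
  have a: "0 \<le> a1" "0 \<le> a2" "0 \<le> a3" "0 < a4"
    using assms wsum_pos ys_bound_pos ts_lower_pos
    by (simp_all add: a1_def a2_def a3_def a4_def add_nonneg_pos)
  have \<eta>: "step_B R \<xi> = 1 / (a1 + a2 + a3 + a4)"
    by (simp add: step_B_def a1_def a2_def a3_def a4_def)
  show "0 < step_B R \<xi>" "step_B R \<xi> * a1 \<le> 1" "step_B R \<xi> * a2 \<le> 1" "step_B R \<xi> * a4 \<le> 1"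
    using a unfolding \<eta> by (simp_all add: field_simps)
  have "step_B R \<xi> * a3 \<le> 1"
    using a unfolding \<eta> by (simp add: field_simps)
  then show "step_B R \<xi> * (2 * (R + ys_bound)) \<le> ts_lower"
    using ts_lower_pos by (simp add: a3_def field_simps)
qed

end

locale saddle_B = fisher_market w u for w :: "real^'n" and u :: "real^'m^'n" +
  fixes xs :: "real^'m^'n" and ts :: "real^'n" and ps :: "real^'m" and ys :: "real^'n"
  assumes saddle: "((xs, ts), (ps, ys)) \<in> saddle_points (LB w u) ZB"
begin

lemma xs_nonneg: "0 \<le> xs" and ts_pos: "0 < ts $ i"
  using saddle by (simp_all add: saddle_points_def)

lemma lagrangian_B_xs_le:
  "0 \<le> x \<Longrightarrow> (\<And>i. 0 < t $ i) \<Longrightarrow> lagrangian_B w u xs ts ps ys \<le> lagrangian_B w u x t ps ys"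
  using saddle_pointsD(2)[OF saddle, of "((x, t), (ps, ys))"] by (simp add: LB_eq)

lemma allocated_xs: "allocated xs = 1" and ts_eq: "ts = utils u xs"
proof -
  define c where "c = allocated xs - 1"
  define r where "r = ts - utils u xs"
  have "lagrangian_B w u xs ts (ps + c) (ys + r) = lagrangian_B w u xs ts ps ys + (norm c)\<^sup>2 + (norm r)\<^sup>2"
    by (simp add: lagrangian_B_def c_def r_def inner_add_left power2_norm_eq_inner)
  moreover have "lagrangian_B w u xs ts (ps + c) (ys + r) \<le> lagrangian_B w u xs ts ps ys"
    using saddle_pointsD(1)[OF saddle, of "((xs, ts), (ps + c, ys + r))"] xs_nonneg ts_pos
    by (simp add: LB_eq)
  ultimately have "(norm c)\<^sup>2 + (norm r)\<^sup>2 \<le> 0"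
    by simp
  moreover have "0 \<le> (norm c)\<^sup>2" "0 \<le> (norm r)\<^sup>2"
    by simp_all
  ultimately have "(norm c)\<^sup>2 = 0" "(norm r)\<^sup>2 = 0"
    by linarith+
  then have "c = 0" "r = 0"
    by simp_all
  then show "allocated xs = 1" "ts = utils u xs"
    by (simp_all add: c_def r_def)
qed

lemma lagrangian_B_xs: "lagrangian_B w u xs ts p y = eisenberg_gale w ts"
  by (simp add: lagrangian_B_def allocated_xs flip: ts_eq)

lemma saddle_of_same_image:
  assumes "0 \<le> x" "allocated x = allocated xs" "utils u x = utils u xs"
  shows "((x, ts), (ps, ys)) \<in> saddle_points (LB w u) ZB"
  using saddle_points_same_primal_values[OF saddle, of "(x, ts)"] assms ts_pos
    LB_cong[OF assms(2,3), of w ts]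
  by simp

lemma log_gain_le_B:
  assumes "0 \<le> xs + \<sigma> *\<^sub>R axis i (axis j 1)" "0 < ts $ i + s"
  shows "w $ i * ln (ts $ i + s) - w $ i * ln (ts $ i) \<le> s * ys $ i + \<sigma> * ps $ j - \<sigma> * u $ i $ j * ys $ i"
proof -
  have "0 < (ts + s *\<^sub>R axis i 1) $ k" for k
    using assms(2) ts_pos[of k] by (simp add: axis_def)
  then have "lagrangian_B w u xs ts ps ys \<le>
      lagrangian_B w u (xs + \<sigma> *\<^sub>R axis i (axis j 1)) (ts + s *\<^sub>R axis i 1) ps ys"
    by (rule lagrangian_B_xs_le[OF assms(1)])
  then show ?thesis
    by (simp add: lagrangian_B_add_axis lagrangian_B_xs)
qed

lemma log_gain_le_B_t:
  "0 < ts $ i + s \<Longrightarrow> w $ i * ln (ts $ i + s) - w $ i * ln (ts $ i) \<le> s * ys $ i"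
  using log_gain_le_B[of 0] xs_nonneg by simp

text \<open>Finite-step versions of the optimality conditions \<open>y\<^sub>i t\<^sub>i = w\<^sub>i\<close> and \<open>y\<^sub>i u\<^sub>i\<^sub>j \<le> p\<^sub>j\<close>,
  with equality on the support of the saddle allocation.\<close>

lemma dual_bounds:
  shows "w $ i / 2 \<le> ys $ i * ts $ i" "ys $ i * ts $ i \<le> 2 * w $ i" "ys $ i * u $ i $ j \<le> ps $ j"
    and "0 < xs $ i $ j \<Longrightarrow> ps $ j \<le> ys $ i * u $ i $ j"
proof -
  have "w $ i * ln (ts $ i + ts $ i) - w $ i * ln (ts $ i) \<le> ts $ i * ys $ i"
    using log_gain_le_B_t[of i "ts $ i"] ts_pos[of i] by simp
  moreover have "ln (ts $ i + ts $ i) = ln 2 + ln (ts $ i)"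
    using ts_pos[of i] by (simp add: ln_mult flip: mult_2)
  ultimately have "w $ i * ln 2 \<le> ys $ i * ts $ i"
    by (simp add: algebra_simps)
  moreover have "w $ i / 2 \<le> w $ i * ln 2"
    using w_pos[of i] ln2_ge_two_thirds by (simp add: mult_left_mono)
  ultimately show "w $ i / 2 \<le> ys $ i * ts $ i"
    by linarith
  have "w $ i * ln (ts $ i / 2) - w $ i * ln (ts $ i) \<le> - ts $ i / 2 * ys $ i"
    using log_gain_le_B_t[of i "- ts $ i / 2"] ts_pos[of i] by simp
  then have "ys $ i * ts $ i \<le> 2 * (w $ i * ln 2)"
    using ts_pos[of i] by (simp add: ln_div algebra_simps)
  moreover have "w $ i * ln 2 \<le> w $ i"
    using w_pos[of i] ln_2_less_1 by (simp add: mult_left_le)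
  ultimately show "ys $ i * ts $ i \<le> 2 * w $ i"
    by linarith
  have "0 \<le> xs + 1 *\<^sub>R axis i (axis j 1)"
    using xs_nonneg by (simp add: less_eq_vec_def axis_axis_nth)
  from log_gain_le_B[OF this, of 0] ts_pos[of i] show "ys $ i * u $ i $ j \<le> ps $ j"
    by (simp add: mult.commute)
  assume "0 < xs $ i $ j"
  have "0 \<le> xs + (- xs $ i $ j) *\<^sub>R axis i (axis j 1)"
    using xs_nonneg by (simp add: less_eq_vec_def axis_axis_nth)
  from log_gain_le_B[OF this, of 0] ts_pos[of i]
  have "xs $ i $ j * ps $ j \<le> xs $ i $ j * (ys $ i * u $ i $ j)"
    by (simp add: algebra_simps)
  with \<open>0 < xs $ i $ j\<close> show "ps $ j \<le> ys $ i * u $ i $ j"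
    by simp
qed

lemma ys_pos: "0 < ys $ i"
proof -
  have "0 < ys $ i * ts $ i"
    using dual_bounds(1)[of i] w_pos[of i] by linarith
  then show ?thesis
    using ts_pos[of i] by (simp add: zero_less_mult_iff)
qed

lemma ps_nonneg: "0 \<le> ps $ j"
  using dual_bounds(3)[of undefined j] ys_pos u_nonneg by (meson less_imp_le mult_nonneg_nonneg order_trans)

lemma ps_le: "ps $ j \<le> 2 * real CARD('n) * wsum"
proof -
  obtain i where share: "1 / real CARD('n) \<le> xs $ i $ j"
    using share_ge_inverse_card[of xs j] allocated_xs by auto
  moreover have "(0::real) < 1 / real CARD('n)"
    by simp
  ultimately have "0 < xs $ i $ j"
    by linarith
  then have "ps $ j \<le> ys $ i * u $ i $ j"
    by (rule dual_bounds(4))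
  also have "\<dots> \<le> ys $ i * (real CARD('n) * ts $ i)"
    using entry_le_card_mult_util[OF xs_nonneg share] ys_pos[of i] ts_eq
    by (intro mult_left_mono) (auto simp: vec_eq_iff)
  also have "\<dots> \<le> real CARD('n) * (2 * w $ i)"
    using dual_bounds(2)[of i] by (simp add: mult.left_commute)
  also have "\<dots> \<le> 2 * real CARD('n) * wsum"
    using w_le_wsum[of i] by simp
  finally show ?thesis .
qed

lemma ys_le: "ys $ i \<le> ys_bound"
proof -
  obtain j where "0 < u $ i $ j"
    using row_pos by blast
  then have "ys $ i * umin \<le> ys $ i * u $ i $ j"
    using ys_pos[of i] umin_le by (simp add: mult_left_mono)
  also have "\<dots> \<le> 2 * real CARD('n) * wsum"
    using dual_bounds(3)[of i j] ps_le[of j] by linarith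
  finally show ?thesis
    using umin_pos by (simp add: ys_bound_def field_simps)
qed

lemma ts_ge: "ts_lower \<le> ts $ i"
proof -
  have "wmin / 2 \<le> ys $ i * ts $ i"
    using dual_bounds(1)[of i] wmin_le[of i] by linarith
  also have "\<dots> \<le> ys_bound * ts $ i"
    using ys_le[of i] ts_pos[of i] by (simp add: mult_right_mono)
  finally show ?thesis
    using ys_bound_pos by (simp add: ts_lower_def field_simps)
qed

lemma dual_gain_B_p:
  assumes share: "1 / real CARD('n) \<le> xs $ i $ j" and \<tau>: "\<bar>\<tau>\<bar> \<le> 1 / (2 * real CARD('n))"
  shows "- (p $ j - ps $ j) * \<tau> - 2 * w $ i * (real CARD('n) * \<tau>)\<^sup>2 \<le> eisenberg_gale w ts -
    lagrangian_B w u (xs + \<tau> *\<^sub>R axis i (axis j 1)) (ts + (\<tau> * u $ i $ j) *\<^sub>R axis i 1) p y"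
proof -
  define U where "U = ts $ i"
  define a where "a = u $ i $ j"
  have U: "0 < U" "U = util u xs i"
    using ts_pos[of i] ts_eq by (simp_all add: U_def vec_eq_iff)
  have small: "\<bar>\<tau> * a\<bar> \<le> U / 2"
    using large_share_shift(2)[OF xs_nonneg share \<tau>] by (simp add: U(2) a_def)
  have "0 \<le> xs + (- \<tau>) *\<^sub>R axis i (axis j 1)"
    using large_share_shift(1)[OF xs_nonneg share, of "- \<tau>"] \<tau> by simp
  moreover have "0 < ts $ i + (- \<tau> * a)"
    using small U(1) by (simp add: U_def abs_le_iff)
  ultimately have "\<tau> * ps $ j \<le> w $ i * ln U - w $ i * ln (U - \<tau> * a)"
    using log_gain_le_B by (fastforce simp: U_def a_def algebra_simps)
  then have "\<tau> * ps $ j - 2 * w $ i * (\<tau> * a / U)\<^sup>2 \<le> w $ i * ln (U + \<tau> * a) - w $ i * ln U"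
    using U(1) small w_pos[of i] by (intro reflected_log_gain) auto
  moreover have "2 * w $ i * (\<tau> * a / U)\<^sup>2 \<le> 2 * w $ i * (real CARD('n) * \<tau>)\<^sup>2"
    using large_share_shift(3)[OF xs_nonneg share \<tau>] w_pos[of i] by (simp add: U(2) a_def)
  ultimately show ?thesis
    by (simp add: lagrangian_B_add_axis lagrangian_B_xs U_def a_def algebra_simps)
qed

lemma dual_gain_B_y:
  assumes \<tau>: "\<bar>\<tau>\<bar> \<le> ts $ i / 2"
  shows "- (y $ i - ys $ i) * \<tau> - 2 * w $ i * (\<tau> / ts $ i)\<^sup>2 \<le>
    eisenberg_gale w ts - lagrangian_B w u xs (ts + \<tau> *\<^sub>R axis i 1) p y"
proof -
  have "\<tau> < ts $ i"
    using ts_pos[of i] \<tau> by (simp add: abs_le_iff)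
  then have "\<tau> * ys $ i \<le> w $ i * ln (ts $ i) - w $ i * ln (ts $ i - \<tau>)"
    using log_gain_le_B_t[of i "- \<tau>"] by simp
  then have "\<tau> * ys $ i - 2 * w $ i * (\<tau> / ts $ i)\<^sup>2 \<le> w $ i * ln (ts $ i + \<tau>) - w $ i * ln (ts $ i)"
    using ts_pos[of i] \<tau> w_pos[of i] by (intro reflected_log_gain) auto
  then show ?thesis
    using lagrangian_B_add_axis[of w u xs 0 i _ ts \<tau> p y]
    by (simp add: lagrangian_B_xs algebra_simps)
qed

lemma dual_step_B_p:
  assumes p: "\<bar>p $ j\<bar> \<le> R" and \<xi>: "0 < \<xi>" and \<eta>: "0 \<le> \<eta>"
    "\<eta> * (2 * real CARD('n) * (R + 2 * real CARD('n) * wsum)) \<le> 1"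
    "\<eta> * (4 * wsum * (real CARD('n))\<^sup>2 + \<xi> * (1 + usum\<^sup>2)) \<le> 1"
  obtains xh th where "0 \<le> xh" "\<And>k. 0 < th $ k"
    "\<eta> * (p $ j - ps $ j)\<^sup>2 / 2 \<le> eisenberg_gale w ts - lagrangian_B w u xh th p y
       - \<xi> / 2 * ((norm (xh - xs))\<^sup>2 + (norm (th - ts))\<^sup>2)"
proof -
  let ?N = "real CARD('n)"
  obtain i where share: "1 / ?N \<le> xs $ i $ j"
    using share_ge_inverse_card[of xs j] allocated_xs by auto
  define d where "d = p $ j - ps $ j"
  define \<tau> where "\<tau> = - \<eta> * d"
  define a where "a = u $ i $ j"
  have "\<bar>\<tau>\<bar> \<le> \<eta> * (R + 2 * ?N * wsum)"
    using p ps_nonneg[of j] ps_le[of j] \<eta>(1) by (simp add: \<tau>_def d_def abs_mult mult_left_mono)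
  also have "\<dots> \<le> 1 / (2 * ?N)"
    using \<eta>(2) by (simp add: field_simps)
  finally have \<tau>: "\<bar>\<tau>\<bar> \<le> 1 / (2 * ?N)" .
  define xh where "xh = xs + \<tau> *\<^sub>R axis i (axis j 1)"
  define th where "th = ts + (\<tau> * a) *\<^sub>R axis i 1"
  have "\<bar>\<tau> * a\<bar> \<le> ts $ i / 2"
    using large_share_shift(2)[OF xs_nonneg share \<tau>] ts_eq by (simp add: a_def vec_eq_iff)
  then have th: "0 < th $ k" for k
    using ts_pos[of k] ts_pos[of i] by (auto simp: th_def axis_def abs_le_iff)
  have "(\<tau> * a)\<^sup>2 \<le> (\<tau> * usum)\<^sup>2"
    using u_nonneg[of i j] u_le_usum[of i j]
    by (simp add: a_def power_mult_distrib mult_left_mono power_mono)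
  then have pen: "(norm (xh - xs))\<^sup>2 + (norm (th - ts))\<^sup>2 \<le> (\<eta> * d)\<^sup>2 * (1 + usum\<^sup>2)"
    by (simp add: xh_def th_def norm_scaleR_axis_axis norm_axis \<tau>_def algebra_simps)
  have "\<eta> * (2 * w $ i * ?N\<^sup>2 + \<xi> / 2 * (1 + usum\<^sup>2)) \<le> 1 / 2"
    using \<eta>(1,3) w_le_wsum[of i] mult_left_mono[of "2 * w $ i * ?N\<^sup>2" "2 * wsum * ?N\<^sup>2" \<eta>]
    by (simp add: field_simps)
  then have "\<eta> * d\<^sup>2 / 2 \<le> \<eta> * d\<^sup>2 - (2 * w $ i * ?N\<^sup>2 + \<xi> / 2 * (1 + usum\<^sup>2)) * (\<eta> * d)\<^sup>2"
    by (rule quadratic_step_gain[OF \<eta>(1)])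
  also have "\<dots> = - d * \<tau> - 2 * w $ i * (?N * \<tau>)\<^sup>2 - \<xi> / 2 * ((\<eta> * d)\<^sup>2 * (1 + usum\<^sup>2))"
    by (simp add: \<tau>_def power2_eq_square algebra_simps)
  also have "\<dots> \<le> - d * \<tau> - 2 * w $ i * (?N * \<tau>)\<^sup>2 - \<xi> / 2 * ((norm (xh - xs))\<^sup>2 + (norm (th - ts))\<^sup>2)"
    using pen \<xi> by (simp add: mult_left_mono)
  also have "\<dots> \<le> eisenberg_gale w ts - lagrangian_B w u xh th p y
       - \<xi> / 2 * ((norm (xh - xs))\<^sup>2 + (norm (th - ts))\<^sup>2)"
    using dual_gain_B_p[OF share \<tau>, of p y] by (simp add: xh_def th_def a_def d_def)
  finally have gain: "\<eta> * d\<^sup>2 / 2 \<le> \<dots>" .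
  have "0 \<le> xh"
    using large_share_shift(1)[OF xs_nonneg share \<tau>] by (simp add: xh_def)
  from that[OF this th gain[unfolded d_def]] show thesis .
qed

lemma dual_step_B_y:
  assumes y: "\<bar>y $ i\<bar> \<le> R" and \<xi>: "0 < \<xi>" and \<eta>: "0 \<le> \<eta>"
    "\<eta> * (2 * (R + ys_bound)) \<le> ts_lower" "\<eta> * (4 * wsum / ts_lower\<^sup>2 + \<xi>) \<le> 1"
  obtains th where "\<And>k. 0 < th $ k"
    "\<eta> * (y $ i - ys $ i)\<^sup>2 / 2 \<le>
       eisenberg_gale w ts - lagrangian_B w u xs th p y - \<xi> / 2 * (norm (th - ts))\<^sup>2"
proof -
  define d where "d = y $ i - ys $ i"
  define \<tau> where "\<tau> = - \<eta> * d"
  have "\<bar>\<tau>\<bar> \<le> \<eta> * (R + ys_bound)"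
    using y ys_pos[of i] ys_le[of i] \<eta>(1) by (simp add: \<tau>_def d_def abs_mult mult_left_mono)
  also have "\<dots> \<le> ts $ i / 2"
  proof -
    have "2 * (\<eta> * (R + ys_bound)) \<le> ts_lower"
      using \<eta>(2) by (simp add: algebra_simps)
    then show ?thesis
      using ts_ge[of i] by linarith
  qed
  finally have \<tau>: "\<bar>\<tau>\<bar> \<le> ts $ i / 2" .
  define th where "th = ts + \<tau> *\<^sub>R axis i 1"
  have th: "0 < th $ k" for k
    using ts_pos[of k] ts_pos[of i] \<tau> by (auto simp: th_def axis_def abs_le_iff)
  define A where "A = 2 * w $ i / (ts $ i)\<^sup>2"
  define B where "B = 2 * wsum / ts_lower\<^sup>2"
  have "A \<le> B"
    unfolding A_def B_def using w_pos[of i] w_le_wsum[of i] ts_ge[of i] ts_lower_pos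
    by (intro frac_le mult_left_mono power_mono) auto
  then have "\<eta> * A \<le> \<eta> * B"
    using \<eta>(1) by (rule mult_left_mono)
  moreover have "\<eta> * (A + \<xi> / 2) = \<eta> * A + \<eta> * \<xi> / 2"
    "\<eta> * (4 * wsum / ts_lower\<^sup>2 + \<xi>) = 2 * (\<eta> * B) + \<eta> * \<xi>"
    by (simp_all add: B_def algebra_simps)
  ultimately have "\<eta> * (2 * w $ i / (ts $ i)\<^sup>2 + \<xi> / 2) \<le> 1 / 2"
    using \<eta>(3) unfolding A_def by linarith
  then have "\<eta> * d\<^sup>2 / 2 \<le> \<eta> * d\<^sup>2 - (2 * w $ i / (ts $ i)\<^sup>2 + \<xi> / 2) * (\<eta> * d)\<^sup>2"
    by (rule quadratic_step_gain[OF \<eta>(1)])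
  also have "\<dots> = - d * \<tau> - 2 * w $ i * (\<tau> / ts $ i)\<^sup>2 - \<xi> / 2 * (norm (th - ts))\<^sup>2"
    by (simp add: th_def norm_axis \<tau>_def power_divide power2_eq_square algebra_simps)
  also have "\<dots> \<le> eisenberg_gale w ts - lagrangian_B w u xs th p y - \<xi> / 2 * (norm (th - ts))\<^sup>2"
    using dual_gain_B_y[OF \<tau>, of y p] by (simp add: th_def d_def)
  finally have gain: "\<eta> * d\<^sup>2 / 2 \<le> \<dots>" .
  from that[OF th gain[unfolded d_def]] show thesis .
qed

lemma dual_step_B:
  assumes p: "\<And>j. \<bar>p $ j\<bar> \<le> R" and y: "\<And>i. \<bar>y $ i\<bar> \<le> R" and \<xi>: "0 < \<xi>"
  obtains xh th d where "0 \<le> xh" "\<And>k. 0 < th $ k"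
    "step_B R \<xi> * d\<^sup>2 / 2 \<le> eisenberg_gale w ts - lagrangian_B w u xh th p y
       - \<xi> / 2 * ((norm (xh - xs))\<^sup>2 + (norm (th - ts))\<^sup>2)"
    "(norm (p - ps))\<^sup>2 + (norm (y - ys))\<^sup>2 \<le> (real CARD('m) + real CARD('n)) * d\<^sup>2"
proof -
  have "0 \<le> R"
    using p[of undefined] by linarith
  note \<eta> = step_B[OF this \<xi>]
  obtain jm where jm: "\<And>j. \<bar>p $ j - ps $ j\<bar> \<le> \<bar>p $ jm - ps $ jm\<bar>"
    using ex_max_coordinate[of "\<lambda>j. \<bar>p $ j - ps $ j\<bar>"] by blast
  obtain im where im: "\<And>i. \<bar>y $ i - ys $ i\<bar> \<le> \<bar>y $ im - ys $ im\<bar>"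
    using ex_max_coordinate[of "\<lambda>i. \<bar>y $ i - ys $ i\<bar>"] by blast
  have dist: "(norm (p - ps))\<^sup>2 + (norm (y - ys))\<^sup>2 \<le> (real CARD('m) + real CARD('n)) * d\<^sup>2"
    if "\<bar>p $ jm - ps $ jm\<bar> \<le> \<bar>d\<bar>" "\<bar>y $ im - ys $ im\<bar> \<le> \<bar>d\<bar>" for d
  proof -
    have "\<bar>(p - ps) $ j\<bar> \<le> \<bar>d\<bar>" "\<bar>(y - ys) $ i\<bar> \<le> \<bar>d\<bar>" for i j
      using jm[of j] im[of i] that by auto
    then have "(norm (p - ps))\<^sup>2 \<le> real CARD('m) * \<bar>d\<bar>\<^sup>2" "(norm (y - ys))\<^sup>2 \<le> real CARD('n) * \<bar>d\<bar>\<^sup>2"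
      by (intro norm_le_card_mult; blast)+
    then show ?thesis
      by (simp add: distrib_right)
  qed
  show thesis
  proof (cases "\<bar>y $ im - ys $ im\<bar> \<le> \<bar>p $ jm - ps $ jm\<bar>")
    case True
    obtain xh th where "0 \<le> xh" "\<And>k. 0 < th $ k"
      "step_B R \<xi> * (p $ jm - ps $ jm)\<^sup>2 / 2 \<le> eisenberg_gale w ts - lagrangian_B w u xh th p y
         - \<xi> / 2 * ((norm (xh - xs))\<^sup>2 + (norm (th - ts))\<^sup>2)"
      using dual_step_B_p[OF p \<xi> less_imp_le[OF \<eta>(1)] \<eta>(2,3)] by blast
    with True dist show thesis
      by (intro that) auto
  next
    case False
    obtain th where "\<And>k. 0 < th $ k"
      "step_B R \<xi> * (y $ im - ys $ im)\<^sup>2 / 2 \<le> eisenberg_gale w ts - lagrangian_B w u xs th p y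
         - \<xi> / 2 * (norm (th - ts))\<^sup>2"
      using dual_step_B_y[OF y \<xi> less_imp_le[OF \<eta>(1)] \<eta>(4,5)] by blast
    with False dist xs_nonneg show thesis
      by (intro that) auto
  qed
qed

lemma primal_gain_B:
  assumes x: "0 \<le> x" and t: "\<And>i. 0 < t $ i" "\<And>i. t $ i \<le> R"
  shows "wmin / (R + usum)\<^sup>2 * (norm (t - ts))\<^sup>2 \<le> lagrangian_B w u x t ps ys - eisenberg_gale w ts"
proof -
  define m where "m = (1 / 2) *\<^sub>R (x + xs)"
  define tm where "tm = (1 / 2) *\<^sub>R (t + ts)"
  have "0 \<le> m"
    using x xs_nonneg by (simp add: m_def less_eq_vec_def)
  moreover have "0 < tm $ i" for i
    using t(1)[of i] ts_pos[of i] by (simp add: tm_def)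
  ultimately have "eisenberg_gale w ts \<le> lagrangian_B w u m tm ps ys"
    using lagrangian_B_xs_le by (simp add: lagrangian_B_xs)
  moreover have "allocated m - 1 = (1 / 2) *\<^sub>R (allocated x - 1)"
    "tm - utils u m = (1 / 2) *\<^sub>R (t - utils u x)"
    using allocated_xs ts_eq
    by (simp_all add: m_def tm_def linear_add[OF linear_allocated] linear_scale[OF linear_allocated]
        linear_add[OF linear_utils] linear_scale[OF linear_utils] vec_eq_iff algebra_simps)
  ultimately have mid: "2 * eisenberg_gale w ts \<le>
      2 * eisenberg_gale w tm + ps \<bullet> (allocated x - 1) + ys \<bullet> (t - utils u x)"
    by (simp add: lagrangian_B_def)
  have "t $ i + ts $ i \<le> R + usum" for i
    using t(2)[of i] util_le_usum[of xs 1 i] le_one_if_allocated_eq_one[OF xs_nonneg allocated_xs] ts_eq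
    by (simp add: vec_eq_iff)
  then have "wmin / (R + usum)\<^sup>2 * (norm (t - ts))\<^sup>2 \<le>
      eisenberg_gale w t + eisenberg_gale w ts - 2 * eisenberg_gale w tm"
    unfolding tm_def using t(1) ts_pos wmin_pos wmin_le
    by (intro eisenberg_gale_midpoint_gap) (auto intro: less_imp_le)
  with mid show ?thesis
    by (simp add: lagrangian_B_def)
qed

lemma test_point_B:
  assumes x: "0 \<le> x" and t: "\<And>i. 0 < t $ i" and \<xi>: "0 < \<xi>"
    and R: "\<And>i. t $ i \<le> R" "\<And>j. \<bar>p $ j\<bar> \<le> R" "\<And>i. \<bar>y $ i\<bar> \<le> R"
  obtains zh \<Phi> d where "zh \<in> ZB"
    "Qgap (LB w u) ((x, t), (p, y)) zh - ereal (\<xi> / 2 * (dist zh ((xs, ts), (ps, ys)))\<^sup>2) = ereal \<Phi>"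
    "wmin / (R + usum)\<^sup>2 * (norm (t - ts))\<^sup>2
       + ((norm (allocated x - 1))\<^sup>2 + (norm (t - utils u x))\<^sup>2) / (2 * \<xi>) + step_B R \<xi> * d\<^sup>2 / 2 \<le> \<Phi>"
    "(norm (p - ps))\<^sup>2 + (norm (y - ys))\<^sup>2 \<le> (real CARD('m) + real CARD('n)) * d\<^sup>2"
proof -
  obtain xh th d where xh: "0 \<le> xh" "\<And>k. 0 < th $ k"
    and dual: "step_B R \<xi> * d\<^sup>2 / 2 \<le> eisenberg_gale w ts - lagrangian_B w u xh th p y
      - \<xi> / 2 * ((norm (xh - xs))\<^sup>2 + (norm (th - ts))\<^sup>2)"
    and d: "(norm (p - ps))\<^sup>2 + (norm (y - ys))\<^sup>2 \<le> (real CARD('m) + real CARD('n)) * d\<^sup>2"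
    using dual_step_B[OF R(2,3) \<xi>] by blast
  define v where "v = allocated x - 1"
  define r where "r = t - utils u x"
  define ph where "ph = ps + (1 / \<xi>) *\<^sub>R v"
  define yh where "yh = ys + (1 / \<xi>) *\<^sub>R r"
  define \<Phi> where "\<Phi> = lagrangian_B w u x t ph yh - lagrangian_B w u xh th p y
    - \<xi> / 2 * ((norm (xh - xs))\<^sup>2 + (norm (th - ts))\<^sup>2)
    - \<xi> / 2 * (norm (ph - ps))\<^sup>2 - \<xi> / 2 * (norm (yh - ys))\<^sup>2"
  have "Qgap (LB w u) ((x, t), (p, y)) ((xh, th), (ph, yh))
      - ereal (\<xi> / 2 * (dist ((xh, th), (ph, yh)) ((xs, ts), (ps, ys)))\<^sup>2) = ereal \<Phi>"
    by (simp add: Qgap_def LB_eq \<Phi>_def dist_norm norm_Pair_power2 distrib_left)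
  moreover have "((xh, th), (ph, yh)) \<in> ZB"
    using xh by simp
  moreover have "wmin / (R + usum)\<^sup>2 * (norm (t - ts))\<^sup>2 + ((norm v)\<^sup>2 + (norm r)\<^sup>2) / (2 * \<xi>)
       + step_B R \<xi> * d\<^sup>2 / 2 \<le> \<Phi>"
  proof -
    have "lagrangian_B w u x t ph yh = lagrangian_B w u x t ps ys + (norm v)\<^sup>2 / \<xi> + (norm r)\<^sup>2 / \<xi>"
      by (simp add: lagrangian_B_def ph_def yh_def v_def r_def inner_add_left power2_norm_eq_inner)
    moreover have "\<xi> / 2 * (norm (ph - ps))\<^sup>2 = (norm v)\<^sup>2 / (2 * \<xi>)"
      "\<xi> / 2 * (norm (yh - ys))\<^sup>2 = (norm r)\<^sup>2 / (2 * \<xi>)"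
      using \<xi> by (simp_all add: ph_def yh_def power2_eq_square)
    moreover have "(norm v)\<^sup>2 / \<xi> - (norm v)\<^sup>2 / (2 * \<xi>) = (norm v)\<^sup>2 / (2 * \<xi>)"
      "(norm r)\<^sup>2 / \<xi> - (norm r)\<^sup>2 / (2 * \<xi>) = (norm r)\<^sup>2 / (2 * \<xi>)"
      "((norm v)\<^sup>2 + (norm r)\<^sup>2) / (2 * \<xi>) = (norm v)\<^sup>2 / (2 * \<xi>) + (norm r)\<^sup>2 / (2 * \<xi>)"
      by (simp_all add: add_divide_distrib)
    ultimately show ?thesis
      using dual primal_gain_B[OF x t R(1)] unfolding \<Phi>_def by linarith
  qed
  ultimately show thesis
    using that[of "((xh, th), (ph, yh))" \<Phi> d] d unfolding v_def r_def by blast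
qed

lemma saddle_near_B:
  assumes H: "orthant_error_bound (market_map u) H" and x: "0 \<le> x"
  obtains zs' where "zs' \<in> saddle_points (LB w u) ZB"
    "(dist ((x, t), (p, y)) zs')\<^sup>2 \<le> (2 * H\<^sup>2 + 1) *
       ((norm (allocated x - 1))\<^sup>2 + (norm (t - utils u x))\<^sup>2 + (norm (t - ts))\<^sup>2)
       + ((norm (p - ps))\<^sup>2 + (norm (y - ys))\<^sup>2)"
proof -
  obtain x' where x': "0 \<le> x'" "market_map u x' = market_map u xs"
    "norm (x - x') \<le> H * norm (market_map u x - market_map u xs)"
    using H x xs_nonneg unfolding orthant_error_bound_def by blast
  define V where "V = (norm (allocated x - 1))\<^sup>2"
  define A where "A = (norm (t - utils u x))\<^sup>2"
  define T where "T = (norm (t - ts))\<^sup>2"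
  have "(norm (utils u x - ts))\<^sup>2 \<le> 2 * A + 2 * T"
    using norm_diff_power2_le[where a = "utils u x" and b = t and c = ts] norm_minus_commute[of "utils u x" t]
    by (simp add: A_def T_def)
  have "(norm (x - x'))\<^sup>2 \<le> (H * norm (market_map u x - market_map u xs))\<^sup>2"
    using x'(3) by (simp add: power_mono)
  also have "\<dots> = H\<^sup>2 * (V + (norm (utils u x - ts))\<^sup>2)"
    by (simp add: market_map_def norm_Pair allocated_xs power_mult_distrib V_def flip: ts_eq)
  also have "\<dots> \<le> H\<^sup>2 * (V + 2 * A + 2 * T)"
    using \<open>(norm (utils u x - ts))\<^sup>2 \<le> 2 * A + 2 * T\<close> by (simp add: mult_left_mono)
  also have "\<dots> \<le> (2 * H\<^sup>2 + 1) * (V + A + T) - T"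
    using zero_le_power2[of H] by (simp add: V_def A_def algebra_simps)
  finally have "(norm (x - x'))\<^sup>2 + T \<le> (2 * H\<^sup>2 + 1) * (V + A + T)"
    by simp
  then show thesis
    using that[of "((x', ts), (ps, ys))"] x' saddle_of_same_image[of x']
    by (simp add: market_map_def dist_norm norm_Pair_power2 V_def A_def T_def)
qed

lemma Gsm_B_ge:
  assumes H: "orthant_error_bound (market_map u) H" and \<xi>: "0 < \<xi>" and R: "0 \<le> R"
    and z: "z \<in> ZB" "norm z \<le> R"
  shows "ereal (error_rate (wmin / (R + usum)\<^sup>2) \<xi> (step_B R \<xi>)
      (real CARD('m) + real CARD('n)) (2 * H\<^sup>2 + 1) * (infdist z (saddle_points (LB w u) ZB))\<^sup>2)
    \<le> Gsm (LB w u) ZB \<xi> z ((xs, ts), (ps, ys))"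
proof -
  obtain x t p y where z_eq: "z = ((x, t), (p, y))"
    by (metis prod.collapse)
  have x: "0 \<le> x" and t: "\<And>i. 0 < t $ i"
    using z(1) by (simp_all add: z_eq)
  have "norm t \<le> R" "norm p \<le> R" "norm y \<le> R"
    using z(2) norm_fst_le[of "(x, t)" "(p, y)"] norm_snd_le[of "(p, y)" "(x, t)"]
      norm_fst_le[of p y] norm_snd_le[of t x] norm_snd_le[of y p] by (simp_all add: z_eq)
  then have tb: "t $ i \<le> R" and pb: "\<bar>p $ j\<bar> \<le> R" and yb: "\<bar>y $ i\<bar> \<le> R" for i j
    using component_le_norm_cart[of t i] component_le_norm_cart[of p j] component_le_norm_cart[of y i]
    by linarith+
  obtain zh \<Phi> d where zh: "zh \<in> ZB"
    and gap: "Qgap (LB w u) ((x, t), (p, y)) zh - ereal (\<xi> / 2 * (dist zh ((xs, ts), (ps, ys)))\<^sup>2) = ereal \<Phi>"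
    and \<Phi>: "wmin / (R + usum)\<^sup>2 * (norm (t - ts))\<^sup>2
       + ((norm (allocated x - 1))\<^sup>2 + (norm (t - utils u x))\<^sup>2) / (2 * \<xi>) + step_B R \<xi> * d\<^sup>2 / 2 \<le> \<Phi>"
    and d: "(norm (p - ps))\<^sup>2 + (norm (y - ys))\<^sup>2 \<le> (real CARD('m) + real CARD('n)) * d\<^sup>2"
    by (rule test_point_B[OF x t \<xi> tb pb yb])
  obtain zs' where zs': "zs' \<in> saddle_points (LB w u) ZB"
    and near: "(dist ((x, t), (p, y)) zs')\<^sup>2 \<le> (2 * H\<^sup>2 + 1) *
       ((norm (allocated x - 1))\<^sup>2 + (norm (t - utils u x))\<^sup>2 + (norm (t - ts))\<^sup>2)
       + ((norm (p - ps))\<^sup>2 + (norm (y - ys))\<^sup>2)"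
    by (rule saddle_near_B[OF H x])
  have "(dist ((x, t), (p, y)) zs')\<^sup>2 \<le> (2 * H\<^sup>2 + 1) *
       (((norm (allocated x - 1))\<^sup>2 + (norm (t - utils u x))\<^sup>2) + (norm (t - ts))\<^sup>2)
       + (real CARD('m) + real CARD('n)) * d\<^sup>2"
    using near d by linarith
  from Gsm_ge_error_rate[OF zh gap zs' this \<Phi>] show ?thesis
    unfolding z_eq using \<xi> R wmin_pos usum_pos step_B(1)[OF R \<xi>] by (simp add: add_nonneg_pos)
qed

end

context fisher_market
begin

lemma error_bound_B:
  assumes \<xi>: "0 < \<xi>" and S: "S \<subseteq> ZB" "bounded S"
  shows "\<exists>\<alpha>>0. \<forall>zs\<in>saddle_points (LB w u) ZB. \<forall>z\<in>S.
    ereal (\<alpha> * (infdist z (saddle_points (LB w u) ZB))\<^sup>2) \<le> Gsm (LB w u) ZB \<xi> z zs"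
proof -
  obtain R where R: "0 < R" "\<And>z. z \<in> S \<Longrightarrow> norm z \<le> R"
    using S(2) bounded_pos by blast
  obtain H where H: "orthant_error_bound (market_map u) H"
    using hoffman_orthant_error_bound[OF linear_market_map] by blast
  define \<alpha> where "\<alpha> = error_rate (wmin / (R + usum)\<^sup>2) \<xi> (step_B R \<xi>)
    (real CARD('m) + real CARD('n)) (2 * H\<^sup>2 + 1)"
  have "0 < \<alpha>"
    unfolding \<alpha>_def using \<xi> R wmin_pos usum_pos step_B(1)[of R \<xi>]
    by (intro error_rate_pos) (auto simp: add_pos_pos)
  moreover have "ereal (\<alpha> * (infdist z (saddle_points (LB w u) ZB))\<^sup>2) \<le> Gsm (LB w u) ZB \<xi> z zs"
    if zs: "zs \<in> saddle_points (LB w u) ZB" and z: "z \<in> S" for zs z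
  proof -
    obtain xs ts ps ys where zs_eq: "zs = ((xs, ts), (ps, ys))"
      by (metis prod.collapse)
    interpret saddle_B w u xs ts ps ys
      using fisher_market_axioms zs by (simp add: saddle_B_def saddle_B_axioms_def zs_eq)
    have "z \<in> ZB" "norm z \<le> R"
      using z S(1) R(2) by auto
    then show ?thesis
      unfolding \<alpha>_def zs_eq by (rule Gsm_B_ge[OF H \<xi> less_imp_le[OF R(1)]])
  qed
  ultimately show ?thesis
    by blast
qed

end

theorem mainTheorem5:
  fixes w :: "real^'n" and u :: "real^'m^'n"
  assumes w_pos: "\<forall>i. w $ i > 0"
    and u_nonneg: "\<forall>i j. u $ i $ j \<ge> 0"
    and rows: "\<forall>i. \<exists>j. u $ i $ j > 0"
    and cols: "\<forall>j. \<exists>i. u $ i $ j > 0"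
  shows "(\<forall>\<xi>>0. \<forall>S. S \<subseteq> ZA \<and> bounded S \<longrightarrow>
            (\<exists>\<alpha>>0. \<forall>zs\<in>saddle_points (LA w u) ZA. \<forall>z\<in>S.
               Gsm (LA w u) ZA \<xi> z zs \<ge> ereal (\<alpha> * (infdist z (saddle_points (LA w u) ZA))\<^sup>2)))
       \<and> (\<forall>\<xi>>0. \<forall>S. S \<subseteq> ZB \<and> bounded S \<longrightarrow>
            (\<exists>\<alpha>>0. \<forall>zs\<in>saddle_points (LB w u) ZB. \<forall>z\<in>S.
               Gsm (LB w u) ZB \<xi> z zs \<ge> ereal (\<alpha> * (infdist z (saddle_points (LB w u) ZB))\<^sup>2)))"
proof -
  interpret fisher_market w u
    using w_pos u_nonneg rows by unfold_locales auto
  show ?thesis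
    using error_bound_A error_bound_B by blast
qed

end
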